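(* With $\Xi$ as defined in the context: (1) $\|H^0f\|\ge7\|f\|$ for every $f$ in the domain of $H^0$ in $L^2_{K,1}$ with $P_\Xi f=0$, and $7$ is the largest constant with this property; (2) for every real $\alpha$, $\psi^{8,\alpha}=\sum_{n=0}^8\alpha^n\Psi^n$ lies in $\mathrm{ran}P_\Xi$; (3) $\|P_\Xi H^1P_\Xi^\perp\|_{L^2_{K,1}\to L^2_{K,1}}=1$, hence $\|Q^{\alpha,\perp}P_\Xi H^1P_\Xi^\perp\|\le1$ for every orthogonal projection $Q^{\alpha,\perp}$.
   Context: Let $\phi=2\pi/3$. Moiré lattice $\Lambda=\mathbb Z\vec a_1+\mathbb Z\vec a_2$ with $\vec a_1=\frac{2\pi}{3}(\sqrt3,1)$, $\vec a_2=\frac{2\pi}{3}(-\sqrt3,1)$; reciprocal lattice $\Lambda^*=\mathbb Z\vec b_1+\mathbb Z\vec b_2$, $\vec b_1=\frac12(\sqrt3,3)$, $\vec b_2=\frac12(-\sqrt3,3)$; $\vec q_1=(0,-1)$, $\vec q_2=\vec q_1+\vec b_1$, $\vec q_3=\vec q_1+\vec b_2$. $\Omega$ a fundamental cell of $\Lambda$, $V$ its area. $U(\vec r)=e^{-i\vec q_1\cdot\vec r}+e^{i\phi}e^{-i\vec q_2\cdot\vec r}+e^{-i\phi}e^{-i\vec q_3\cdot\vec r}$, $\bar\partial=\frac12(\partial_x+i\partial_y)$, $D^\alpha=\begin{pmatrix}-2i\bar\partial&\alpha U(\vec r)\\ \alpha U(-\vec r)&-2i\bar\partial\end{pmatrix}$,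 $H^\alpha=\begin{pmatrix}0&(D^\alpha)^\dagger\\ D^\alpha&0\end{pmatrix}=H^0+\alpha H^1$. $L^2_K$: functions $f\in L^2_{loc}(\mathbb R^2;\mathbb C^4)$ with $f(\vec r+\vec v)=\mathrm{diag}(1,e^{i\vec q_1\cdot\vec v},1,e^{i\vec q_1\cdot\vec v})f(\vec r)$ for all $\vec v\in\Lambda$, inner product $\int_\Omega f^\dagger g$. $R_\phi$ counterclockwise rotation by $\phi$, $R_\phi^T$ its transpose (clockwise rotation), $(\mathcal Rf)(\vec r)=\mathrm{diag}(1,1,e^{-i\phi},e^{-i\phi})f(R_\phi\vec r)$, $L^2_{K,1}=\{f\in L^2_K:\mathcal Rf=f\}$. $e_j$ standard basis vectors of $\mathbb C^4$. Chiral basis: for $\vec k\ne0$ let $\hat z_{\vec k}=(k_1+ik_2)/|\vec k|$. For $\vec G\in\Lambda^*\setminus\{0\}$ set $\chi^{\widetilde{\vec G},+1}(\vec r)=(3V)^{-1/2}e_1\sum_{k=0}^2e^{i((R_\phi^T)^k\vec G)\cdot\vec r}$ and $\chi^{\widetilde{\vec G},-1}(\vec r)=(3V)^{-1/2}e_3\sum_{k=0}^2\hat z_{(R_\phi^T)^k\vec G}e^{i((R_\phi^T)^k\vec G)\cdot\vec r}$; for $\vec G\in\Lambda^*$ define $\chi^{\widetilde{\vec q_1+\vec G},\pm1}$ by the same formulas with $\vec G$ replaced by $\vec q_1+\vec G$ and $e_1,e_3$ replaced by $e_2,e_4$. These depend only on the orbit of the index under $R_\phi^T$; together with $\chi^{\widetilde{\vec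 0}}=V^{-1/2}e_1$ (one function per orbit and sign) they form an orthonormal basis of $L^2_{K,1}$, with $H^0\chi^{\widetilde{\vec p},\pm1}=|\vec p|\chi^{\widetilde{\vec p},\mp1}$. $\Xi$ is the set consisting of $\chi^{\widetilde{\vec0}}$, all $\chi^{\widetilde{\vec p},\pm1}$ with $\vec p\in(\Lambda^*\setminus\{0\})\cup(\vec q_1+\Lambda^* )$ and $|\vec p|\le4\sqrt3$, and the four functions $\chi^{\widetilde{\vec q_1-4\vec b_1+\vec b_2},\pm1}$, $\chi^{\widetilde{\vec q_1+\vec b_1-4\vec b_2},\pm1}$. $P_\Xi$ is the orthogonal projection onto $\mathrm{span}\,\Xi$, $P_\Xi^\perp=I-P_\Xi$. $\Psi^0=V^{-1/2}e_1$; $P$ orthogonal projection onto $\Psi^0$ in $L^2_{K,1}$, $P^\perp=I-P$, $P^\perp(H^0)^{-1}P^\perp$ the inverse of $H^0$ on $\mathrm{ran}P^\perp$ extended by $0$; $\Psi^n=-P^\perp(H^0)^{-1}P^\perp H^1\Psi^{n-1}$. *)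

theory Defs
  imports "HOL-Analysis.Analysis"
begin

text \<open>
  Points of the plane are complex numbers (x,y) = x + iy, so the dot product is
  p . r = Re (cnj p * r), the counterclockwise rotation R_phi is multiplication by cis phi,
  and its transpose is multiplication by cis (-phi).
  An element f of L2_K is represented by its Fourier coefficients:
  f_j(r) = sum over p of c j p * exp (i p.r), components j = 0,1,2,3 (standing for e_1..e_4).
  The quasi-periodicity of L2_K forces the frequencies of components 0,2 to lie in the
  reciprocal lattice and those of components 1,3 in q1 + reciprocal lattice.
  By Parseval, the inner product int_Omega f^dagger g equals V * sum conj(c) * d.
\<close>

type_synonym coeff = "nat \<Rightarrow> complex \<Rightarrow> complex"

definition phi :: real where "phi = 2 * pi / 3"

definition a1 :: complex where "a1 = of_real (2 * pi / 3) * Complex (sqrt 3) 1"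
definition a2 :: complex where "a2 = of_real (2 * pi / 3) * Complex (- sqrt 3) 1"

definition Vol :: real where "Vol = \<bar>Im (cnj a1 * a2)\<bar>"

definition b1 :: complex where "b1 = Complex (sqrt 3 / 2) (3 / 2)"
definition b2 :: complex where "b2 = Complex (- sqrt 3 / 2) (3 / 2)"

definition q1 :: complex where "q1 = Complex 0 (-1)"
definition q2 :: complex where "q2 = q1 + b1"
definition q3 :: complex where "q3 = q1 + b2"

definition LamStar :: "complex set" where
  "LamStar = {of_int m * b1 + of_int n * b2 | m n. True}"

definition freq :: "nat \<Rightarrow> complex set" where
  "freq j = (if even j then LamStar else (\<lambda>g. q1 + g) ` LamStar)"

definition L2K :: "coeff set" where
  "L2K = {c. (\<forall>j p. c j p \<noteq> 0 \<longrightarrow> j < 4 \<and> p \<in> freq j) \<and>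
             (\<lambda>(j, p). (cmod (c j p))\<^sup>2) summable_on UNIV}"

definition inner_K :: "coeff \<Rightarrow> coeff \<Rightarrow> complex" where
  "inner_K c d = of_real Vol * (\<Sum>\<^sub>\<infinity>(j, p). cnj (c j p) * d j p)"

definition nrm :: "coeff \<Rightarrow> real" where
  "nrm c = sqrt (Vol * (\<Sum>\<^sub>\<infinity>(j, p). (cmod (c j p))\<^sup>2))"

definition smult :: "complex \<Rightarrow> coeff \<Rightarrow> coeff" where
  "smult a c = (\<lambda>j p. a * c j p)"

text \<open>The rotation operator (Rf)(r) = diag(1,1,e^{-i phi},e^{-i phi}) f(R_phi r):
  the coefficient of exp(i k.r) is the old coefficient at R_phi k.\<close>
definition Rot :: "coeff \<Rightarrow> coeff" where
  "Rot c = (\<lambda>j p. (if 2 \<le> j then cis (- phi) else 1) * c j (cis phi * p))"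

definition L2K1 :: "coeff set" where
  "L2K1 = {c \<in> L2K. Rot c = c}"

text \<open>H^0: -2i dbar acts on exp(i p.r) as multiplication by p1 + i p2 = p.\<close>
definition H0 :: "coeff \<Rightarrow> coeff" where
  "H0 c = (\<lambda>j p. if j = 0 then cnj p * c 2 p
                 else if j = 1 then cnj p * c 3 p
                 else if j = 2 then p * c 0 p
                 else if j = 3 then p * c 1 p else 0)"

definition domH0 :: "coeff set" where
  "domH0 = {c \<in> L2K1. (\<lambda>(j, p). (cmod p * cmod (c j p))\<^sup>2) summable_on UNIV}"

definition qv :: "nat \<Rightarrow> complex" where "qv k = [q1, q2, q3] ! k"
definition wv :: "nat \<Rightarrow> complex" where "wv k = [1, cis phi, cis (- phi)] ! k"

text \<open>H^1 = [[0, (D^1)^dagger],[D^1, 0]] with D^1 = [[0, U(r)],[U(-r), 0]],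
  U(r) = sum_k w_k exp(-i q_k.r).  Multiplication by exp(-i q.r) maps the coefficient
  sequence g to p \<mapsto> g (p + q).\<close>
definition H1 :: "coeff \<Rightarrow> coeff" where
  "H1 c = (\<lambda>j p. if j = 0 then (\<Sum>k<3. cnj (wv k) * c 3 (p + qv k))
                 else if j = 1 then (\<Sum>k<3. cnj (wv k) * c 2 (p - qv k))
                 else if j = 2 then (\<Sum>k<3. wv k * c 1 (p + qv k))
                 else if j = 3 then (\<Sum>k<3. wv k * c 0 (p - qv k)) else 0)"

text \<open>The sign +1 is True, -1 is False.\<close>
definition orbit :: "complex \<Rightarrow> complex set" where
  "orbit p = {p, cis (- phi) * p, cis (- 2 * phi) * p}"

definition zhat :: "complex \<Rightarrow> complex" where
  "zhat k = k / of_real (cmod k)"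

definition chi_comp :: "complex \<Rightarrow> bool \<Rightarrow> nat" where
  "chi_comp p s = (if p \<in> LamStar then (if s then 0 else 2) else (if s then 1 else 3))"

definition chi :: "complex \<Rightarrow> bool \<Rightarrow> coeff" where
  "chi p s = (\<lambda>j q. if j = chi_comp p s \<and> q \<in> orbit p
                    then of_real (1 / sqrt (3 * Vol)) * (if s then 1 else zhat q) else 0)"

definition chi0 :: coeff where
  "chi0 = (\<lambda>j q. if j = 0 \<and> q = 0 then of_real (1 / sqrt Vol) else 0)"

definition Xi :: "coeff set" where
  "Xi = {chi0}
     \<union> {chi p s | p s. p \<in> (LamStar - {0}) \<union> (\<lambda>g. q1 + g) ` LamStar \<and> cmod p \<le> 4 * sqrt 3}
     \<union> {chi p s | p s. p \<in> {q1 - 4 * b1 + b2, q1 + b1 - 4 * b2}}"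

definition cspan :: "coeff set \<Rightarrow> coeff set" where
  "cspan X = {c. \<exists>F a. finite F \<and> F \<subseteq> X \<and> c = (\<lambda>j q. \<Sum>x\<in>F. a x * x j q)}"

definition orth_proj :: "coeff set \<Rightarrow> coeff \<Rightarrow> coeff" where
  "orth_proj S c = (THE d. d \<in> S \<and> (\<forall>e\<in>S. inner_K e (c - d) = 0))"

definition PXi :: "coeff \<Rightarrow> coeff" where "PXi = orth_proj (cspan Xi)"
definition PXi_perp :: "coeff \<Rightarrow> coeff" where "PXi_perp c = c - PXi c"

definition Psi0 :: coeff where
  "Psi0 = (\<lambda>j q. if j = 0 \<and> q = 0 then of_real (1 / sqrt Vol) else 0)"

definition P :: "coeff \<Rightarrow> coeff" where "P = orth_proj (cspan {Psi0})"
definition Pperp :: "coeff \<Rightarrow> coeff" where "Pperp c = c - P c"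

definition H0inv_perp :: "coeff \<Rightarrow> coeff" where
  "H0inv_perp c = (THE d. d \<in> domH0 \<and> Pperp d = d \<and> H0 d = c)"

definition pinvH0 :: "coeff \<Rightarrow> coeff" where
  "pinvH0 c = Pperp (H0inv_perp (Pperp c))"

primrec Psi :: "nat \<Rightarrow> coeff" where
  "Psi 0 = Psi0"
| "Psi (Suc n) = - pinvH0 (H1 (Psi n))"

definition psi8 :: "real \<Rightarrow> coeff" where
  "psi8 \<alpha> = (\<lambda>j q. \<Sum>n\<le>8. of_real \<alpha> ^ n * Psi n j q)"

text \<open>Operator norm on L2_{K,1} (extended real, so unboundedness is not hidden).\<close>
definition opnorm :: "(coeff \<Rightarrow> coeff) \<Rightarrow> ereal" where
  "opnorm T = (SUP f\<in>{f \<in> L2K1. nrm f \<le> 1}. ereal (nrm (T f)))"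

definition is_orth_proj :: "(coeff \<Rightarrow> coeff) \<Rightarrow> bool" where
  "is_orth_proj Q \<longleftrightarrow> (\<forall>f\<in>L2K1. Q f \<in> L2K1) \<and> (\<forall>f\<in>L2K1. Q (Q f) = Q f) \<and>
     (\<forall>f\<in>L2K1. \<forall>g\<in>L2K1. inner_K (Q f) g = inner_K f (Q g))"

end

theory Submission
  imports Defs
begin

text \<open>In Fourier coefficients everything is explicit: H0 acts on a mode (j, p) through the symbol
  of modulus |p|, and H1 couples (j, p) to the three modes (3 - j, p +- q_k).  The span of Xi is
  exactly the space of rotation-invariant functions supported on a finite set of modes, those with
  |p|^2 <= 48 together with two extra orbits.  Every admissible mode outside this set has
  |p|^2 >= 49, with equality on the orbit of q1 - 2 b1 - 2 b2; this gives the gap 7 and its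
  optimality.  The terms Psi^n are supported on hexagons that grow by one lattice step every two
  orders and stay inside the set up to n = 8.  Finally, a finite check shows that every mode has
  at most one H1-neighbour across the boundary of the set, so P_Xi H1 P_Xi_perp sends distinct
  modes just outside to distinct modes just inside with unimodular coefficients: its norm is at
  most 1, and the same witness attains it.  Orthogonal projections are contractions, which gives
  the last bound.\<close>

section \<open>Finitely supported coefficient functions\<close>

lemma Vol_pos: "Vol > 0"
proof -
  have "Im (cnj a1 * a2) = (2 * pi / 3)^2 * (2 * sqrt 3)"
    by (simp add: a1_def a2_def field_simps power2_eq_square)
  then show ?thesis by (simp add: Vol_def)
qed

definition supp :: "coeff \<Rightarrow> (nat \<times> complex) set" where
  "supp c = {(j, p). c j p \<noteq> 0}"

definition restrict_coeff :: "(nat \<times> complex) set \<Rightarrow> coeff \<Rightarrow> coeff" where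
  "restrict_coeff A c = (\<lambda>j p. if (j, p) \<in> A then c j p else 0)"

lemma mem_supp_iff [simp]: "(j, p) \<in> supp c \<longleftrightarrow> c j p \<noteq> 0"
  by (simp add: supp_def)

lemma supp_subset_zero: "supp c \<subseteq> F \<Longrightarrow> (j, p) \<notin> F \<Longrightarrow> c j p = 0"
  unfolding supp_def by blast

lemma supp_restrict_coeff: "supp (restrict_coeff A c) \<subseteq> A"
  by (auto simp: supp_def restrict_coeff_def)

lemma infsum_eq_sum_if_zero_outside:
  fixes f :: "'a \<Rightarrow> 'b::{comm_monoid_add, t2_space}"
  assumes "finite F" "\<And>x. x \<notin> F \<Longrightarrow> f x = 0"
  shows "infsum f UNIV = sum f F"
proof -
  have "infsum f UNIV = infsum f F"
    by (rule infsum_cong_neutral) (use assms in auto)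
  then show ?thesis using assms(1) by simp
qed

lemma summable_on_if_zero_outside:
  fixes f :: "'a \<Rightarrow> 'b::{comm_monoid_add, t2_space}"
  assumes "finite F" "\<And>x. x \<notin> F \<Longrightarrow> f x = 0"
  shows "f summable_on UNIV"
  by (rule finite_nonzero_values_imp_summable_on, rule finite_subset [OF _ assms(1)]) (use assms in auto)

lemma nrm_finite:
  assumes "finite F" "supp c \<subseteq> F"
  shows "nrm c = sqrt (Vol * (\<Sum>(j, p)\<in>F. (cmod (c j p))\<^sup>2))"
  unfolding nrm_def using assms supp_subset_zero
  by (subst infsum_eq_sum_if_zero_outside [of F]) auto

lemma nrm_nonneg: "nrm c \<ge> 0"
  using Vol_pos by (simp add: nrm_def infsum_nonneg case_prod_unfold)

lemma inner_K_finite: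
  assumes "finite F" "supp e \<subseteq> F"
  shows "inner_K e g = Vol * (\<Sum>(j, p)\<in>F. cnj (e j p) * g j p)"
  unfolding inner_K_def using assms supp_subset_zero
  by (subst infsum_eq_sum_if_zero_outside [of F]) auto

lemma inner_K_diff_right:
  assumes "finite (supp e)"
  shows "inner_K e (g - h) = inner_K e g - inner_K e h"
  by (simp add: inner_K_finite [OF assms subset_refl] case_prod_unfold right_diff_distrib
      sum_subtractf)

lemma cnj_mult_self: "cnj z * z = of_real ((cmod z)\<^sup>2)"
  by (subst complex_norm_square) (rule mult.commute)

lemma inner_K_self_eq_0:
  assumes "finite (supp e)" "inner_K e e = 0"
  shows "e = (\<lambda>j p. 0)"
proof -
  have "inner_K e e = Vol * (\<Sum>(j, p)\<in>supp e. cnj (e j p) * e j p)"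
    by (rule inner_K_finite [OF assms(1) subset_refl])
  also have "\<dots> = of_real (Vol * (\<Sum>(j, p)\<in>supp e. (cmod (e j p))\<^sup>2))"
    by (simp only: cnj_mult_self of_real_sum of_real_mult case_prod_unfold)
  finally have "inner_K e e = of_real (Vol * (\<Sum>(j, p)\<in>supp e. (cmod (e j p))\<^sup>2))" .
  then have "Vol * (\<Sum>(j, p)\<in>supp e. (cmod (e j p))\<^sup>2) = 0"
    using assms(2) by (metis of_real_eq_0_iff)
  then have "(\<Sum>(j, p)\<in>supp e. (cmod (e j p))\<^sup>2) = 0"
    using Vol_pos by simp
  then have "supp e = {}"
    using assms(1) by (subst (asm) sum_nonneg_eq_0_iff) auto
  then show ?thesis by (auto simp: supp_def fun_eq_iff)
qed

lemma inner_K_self: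
  assumes "(\<lambda>(j, p). (cmod (c j p))\<^sup>2) summable_on UNIV"
  shows "inner_K c c = of_real ((nrm c)\<^sup>2)"
proof -
  let ?s = "\<Sum>\<^sub>\<infinity>(j, p). (cmod (c j p))\<^sup>2"
  have "((\<lambda>(j, p). cnj (c j p) * c j p) has_sum of_real ?s) UNIV"
    using has_sum_of_real [OF has_sum_infsum [OF assms]]
    by (simp add: case_prod_unfold cnj_mult_self)
  moreover have "?s \<ge> 0"
    by (rule infsum_nonneg) auto
  ultimately show ?thesis
    using Vol_pos by (simp add: inner_K_def nrm_def infsumI)
qed

lemma norm_inner_K_le:
  assumes x: "finite (supp x)" and y: "(\<lambda>(j, p). (cmod (y j p))\<^sup>2) summable_on UNIV"
  shows "cmod (inner_K x y) \<le> nrm x * nrm y"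
proof -
  let ?F = "supp x"
  let ?nx = "\<lambda>z. cmod (x (fst z) (snd z))" and ?ny = "\<lambda>z. cmod (y (fst z) (snd z))"
  have "(\<Sum>z\<in>?F. (?ny z)\<^sup>2) \<le> (\<Sum>\<^sub>\<infinity>z. (?ny z)\<^sup>2)"
    by (rule finite_sum_le_infsum) (use x y in \<open>auto simp: case_prod_unfold\<close>)
  then have y_bound: "L2_set ?ny ?F \<le> sqrt (\<Sum>\<^sub>\<infinity>(j, p). (cmod (y j p))\<^sup>2)"
    unfolding L2_set_def case_prod_unfold by (rule real_sqrt_le_mono)
  have "cmod (\<Sum>(j, p)\<in>?F. cnj (x j p) * y j p) \<le> (\<Sum>z\<in>?F. \<bar>?nx z\<bar> * \<bar>?ny z\<bar>)"
    by (rule norm_sum [THEN order_trans]) (simp add: case_prod_unfold norm_mult)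
  also have "\<dots> \<le> L2_set ?nx ?F * L2_set ?ny ?F"
    by (rule L2_set_mult_ineq)
  also have "\<dots> \<le> L2_set ?nx ?F * sqrt (\<Sum>\<^sub>\<infinity>(j, p). (cmod (y j p))\<^sup>2)"
    by (rule mult_left_mono [OF y_bound L2_set_nonneg])
  finally have "cmod (\<Sum>(j, p)\<in>?F. cnj (x j p) * y j p)
      \<le> sqrt (\<Sum>(j, p)\<in>?F. (cmod (x j p))\<^sup>2) * sqrt (\<Sum>\<^sub>\<infinity>(j, p). (cmod (y j p))\<^sup>2)"
    by (simp add: L2_set_def case_prod_unfold)
  then have "cmod (inner_K x y)
      \<le> Vol * (sqrt (\<Sum>(j, p)\<in>?F. (cmod (x j p))\<^sup>2) * sqrt (\<Sum>\<^sub>\<infinity>(j, p). (cmod (y j p))\<^sup>2))"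
    using Vol_pos by (simp add: inner_K_finite [OF x subset_refl] norm_mult mult_left_mono)
  also have "\<dots> = nrm x * nrm y"
  proof -
    have "Vol = sqrt Vol * sqrt Vol" using Vol_pos by simp
    then show ?thesis
      by (subst (1) \<open>Vol = _\<close>)
        (simp add: nrm_finite [OF x subset_refl] nrm_def [of y] real_sqrt_mult ac_simps)
  qed
  finally show ?thesis .
qed

lemma cspan_zero: "(\<lambda>j p. 0) \<in> cspan X"
  unfolding cspan_def by (rule CollectI, rule exI [of _ "{}"]) auto

lemma cspan_base: "x \<in> X \<Longrightarrow> x \<in> cspan X"
  unfolding cspan_def by (rule CollectI, rule exI [of _ "{x}"], rule exI [of _ "\<lambda>_. 1"]) auto

lemma cspan_add:
  assumes "c \<in> cspan X" "d \<in> cspan X"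
  shows "(\<lambda>j p. c j p + d j p) \<in> cspan X"
proof -
  obtain F a where F: "finite F" "F \<subseteq> X" "c = (\<lambda>j q. \<Sum>x\<in>F. a x * x j q)"
    using assms(1) unfolding cspan_def by blast
  obtain G b where G: "finite G" "G \<subseteq> X" "d = (\<lambda>j q. \<Sum>x\<in>G. b x * x j q)"
    using assms(2) unfolding cspan_def by blast
  define a' where "a' x = (if x \<in> F then a x else 0)" for x
  define b' where "b' x = (if x \<in> G then b x else 0)" for x
  have "(\<Sum>x\<in>F \<union> G. a' x * x j q) = c j q" "(\<Sum>x\<in>F \<union> G. b' x * x j q) = d j q" for j q
    unfolding F(3) G(3) a'_def b'_def
    by (rule sum.mono_neutral_cong_right; use F G in auto)+
  then have "(\<lambda>j p. c j p + d j p) = (\<lambda>j q. \<Sum>x\<in>F \<union> G. (a' x + b' x) * x j q)"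
    by (simp add: distrib_right sum.distrib)
  then show ?thesis
    unfolding cspan_def using F(1,2) G(1,2)
    by (intro CollectI exI [of _ "F \<union> G"] exI [of _ "\<lambda>x. a' x + b' x"]) simp
qed

lemma cspan_scale:
  assumes "c \<in> cspan X"
  shows "(\<lambda>j p. z * c j p) \<in> cspan X"
proof -
  obtain F a where F: "finite F" "F \<subseteq> X" "c = (\<lambda>j q. \<Sum>x\<in>F. a x * x j q)"
    using assms unfolding cspan_def by blast
  then have "(\<lambda>j p. z * c j p) = (\<lambda>j q. \<Sum>x\<in>F. (z * a x) * x j q)"
    by (simp add: sum_distrib_left mult.assoc)
  then show ?thesis
    unfolding cspan_def using F(1,2) by (intro CollectI exI [of _ F] exI [of _ "\<lambda>x. z * a x"]) simp
qed

lemma cspan_diff: "c \<in> cspan X \<Longrightarrow> d \<in> cspan X \<Longrightarrow> c - d \<in> cspan X"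
  using cspan_add [of c X "\<lambda>j p. -1 * d j p"] cspan_scale [of d X "-1"]
  by (simp add: fun_diff_def)

lemma cspan_sum:
  "finite I \<Longrightarrow> (\<And>i. i \<in> I \<Longrightarrow> f i \<in> cspan X) \<Longrightarrow> (\<lambda>j p. \<Sum>i\<in>I. f i j p) \<in> cspan X"
proof (induction I rule: finite_induct)
  case (insert i I)
  then show ?case using cspan_add [of "f i" X "\<lambda>j p. \<Sum>i\<in>I. f i j p"] by simp
qed (simp add: cspan_zero)

lemma supp_cspan_subset:
  assumes "\<And>x. x \<in> X \<Longrightarrow> supp x \<subseteq> A" "c \<in> cspan X"
  shows "supp c \<subseteq> A"
proof
  fix y assume "y \<in> supp c"
  obtain F a where F: "F \<subseteq> X" "c = (\<lambda>j q. \<Sum>x\<in>F. a x * x j q)"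
    using assms(2) unfolding cspan_def by blast
  with \<open>y \<in> supp c\<close> obtain x where "x \<in> F" "a x * x (fst y) (snd y) \<noteq> 0"
    by (cases y) (auto intro: sum.not_neutral_contains_not_neutral)
  then show "y \<in> A"
    using assms(1) F(1) by (metis mem_supp_iff mult_eq_0_iff prod.collapse subsetD)
qed

lemma orth_proj_eq_restrict:
  assumes A: "finite A" and X: "\<And>x. x \<in> X \<Longrightarrow> supp x \<subseteq> A"
    and c: "restrict_coeff A c \<in> cspan X"
  shows "orth_proj (cspan X) c = restrict_coeff A c"
  unfolding orth_proj_def
proof (rule the_equality)
  let ?d = "restrict_coeff A c"
  have fin: "finite (supp e)" if "e \<in> cspan X" for e
    using finite_subset [OF supp_cspan_subset [OF X that] A] .
  have orth: "inner_K e (c - ?d) = 0" if "e \<in> cspan X" for e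
    by (simp add: inner_K_finite [OF A supp_cspan_subset [OF X that]] restrict_coeff_def
        case_prod_unfold)
  show "?d \<in> cspan X \<and> (\<forall>e\<in>cspan X. inner_K e (c - ?d) = 0)"
    using c orth by blast
  fix d assume d: "d \<in> cspan X \<and> (\<forall>e\<in>cspan X. inner_K e (c - d) = 0)"
  then have e: "d - ?d \<in> cspan X" using c cspan_diff by blast
  have "inner_K (d - ?d) (d - ?d) = inner_K (d - ?d) ((c - ?d) - (c - d))"
    by (simp add: fun_diff_def)
  also have "\<dots> = inner_K (d - ?d) (c - ?d) - inner_K (d - ?d) (c - d)"
    by (rule inner_K_diff_right [OF fin [OF e]])
  also have "\<dots> = 0"
    using d e orth [OF e] by simp
  finally have "d - ?d = (\<lambda>j p. 0)"
    by (rule inner_K_self_eq_0 [OF fin [OF e]])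
  then show "d = ?d"
    by (simp add: fun_eq_iff fun_diff_def)
qed

lemma is_orth_proj_nrm_le:
  assumes Q: "is_orth_proj Q" and x: "x \<in> L2K1" "finite (supp x)"
  shows "nrm (Q x) \<le> nrm x"
proof -
  have Qx: "Q x \<in> L2K1" "Q (Q x) = Q x"
    using Q x(1) by (auto simp: is_orth_proj_def)
  then have summable: "(\<lambda>(j, p). (cmod (Q x j p))\<^sup>2) summable_on UNIV"
    by (simp add: L2K1_def L2K_def)
  have "(nrm (Q x))\<^sup>2 = cmod (inner_K (Q x) (Q x))"
    by (simp add: inner_K_self [OF summable] norm_power)
  also have "inner_K (Q x) (Q x) = inner_K x (Q x)"
    using Q x(1) Qx by (metis is_orth_proj_def)
  also have "cmod (inner_K x (Q x)) \<le> nrm x * nrm (Q x)"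
    by (rule norm_inner_K_le [OF x(2) summable])
  finally have "nrm (Q x) * nrm (Q x) \<le> nrm x * nrm (Q x)"
    by (simp add: power2_eq_square)
  then show ?thesis
    using nrm_nonneg [of x] nrm_nonneg [of "Q x"]
    by (metis mult_right_le_imp_le order_le_less mult_zero_right)
qed

section \<open>The reciprocal lattice and the rotation by phi\<close>

lemma cis_phi: "cis phi = Complex (-1/2) (sqrt 3 / 2)"
  by (simp add: phi_def complex_eq_iff cos_120 sin_120)

lemma cis_minus_phi: "cis (- phi) = Complex (-1/2) (- sqrt 3 / 2)"
  by (simp add: phi_def complex_eq_iff cos_120 sin_120)

lemma cis_minus_phi_eq_square: "cis (- phi) = cis phi * cis phi"
  by (simp add: cis_phi cis_minus_phi complex_eq_iff field_simps)

lemma cis_phi_cube: "cis phi ^ 3 = 1"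
  by (simp add: cis_phi complex_eq_iff field_simps power3_eq_cube)

lemma rot_inverse: "cis (- phi) * (cis phi * p) = p" "cis phi * (cis (- phi) * p) = p"
  by (simp_all add: mult.assoc [symmetric] cis_mult)

lemma orbit_eq: "orbit p = {p, cis (- phi) * p, cis phi * p}"
proof -
  have "cis (- 2 * phi) = cis (- phi) * cis (- phi)" by (simp add: cis_mult)
  also have "\<dots> = cis phi" by (simp add: cis_phi cis_minus_phi complex_eq_iff field_simps)
  finally have "cis (- 2 * phi) = cis phi" .
  then show ?thesis by (simp add: orbit_def)
qed

lemma mem_orbit_iff: "q \<in> orbit p \<longleftrightarrow> q = p \<or> q = cis (- phi) * p \<or> q = cis phi * p"
  by (simp add: orbit_eq)

lemma rot_mem_orbit_iff: "cis phi * p \<in> orbit e \<longleftrightarrow> p \<in> orbit e"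
proof -
  have "cis phi * (cis phi * e) = cis (- phi) * e"
    by (simp add: cis_minus_phi_eq_square mult.assoc)
  then show ?thesis
    unfolding mem_orbit_iff using rot_inverse by metis
qed

lemma orbit_sym: "q \<in> orbit p \<Longrightarrow> p \<in> orbit q"
  unfolding mem_orbit_iff using rot_inverse by metis

lemma orbit_trans: "x \<in> orbit q \<Longrightarrow> q \<in> orbit p \<Longrightarrow> x \<in> orbit p"
  using rot_mem_orbit_iff [of q p] rot_mem_orbit_iff [of "cis (- phi) * q" p] rot_inverse
  unfolding mem_orbit_iff [of x q] by metis

lemma orbit_eq_of_mem: "q \<in> orbit p \<Longrightarrow> orbit q = orbit p"
  by (auto intro: orbit_trans orbit_sym)

lemma zero_mem_orbit_iff: "0 \<in> orbit p \<longleftrightarrow> p = 0"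
  by (auto simp: mem_orbit_iff)

lemma card_orbit: "p \<noteq> 0 \<Longrightarrow> card (orbit p) = 3"
proof -
  assume p: "p \<noteq> 0"
  have "cis phi \<noteq> 1" "cis (- phi) \<noteq> 1" "cis (- phi) \<noteq> cis phi"
    by (simp_all add: cis_phi cis_minus_phi complex_eq_iff)
  then show ?thesis using p by (simp add: orbit_eq)
qed

lemma rot_mem_iff_if_invariant:
  assumes "\<And>p. p \<in> A \<Longrightarrow> cis phi * p \<in> A" "\<And>p. p \<in> A \<Longrightarrow> cis (- phi) * p \<in> A"
  shows "cis phi * p \<in> A \<longleftrightarrow> p \<in> A"
  using assms rot_inverse by metis

lemma invariant_mem_orbit_iff:
  assumes "\<And>p. cis phi * p \<in> A \<longleftrightarrow> p \<in> A" and "q \<in> orbit p"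
  shows "q \<in> A \<longleftrightarrow> p \<in> A"
  using assms rot_inverse unfolding mem_orbit_iff by metis

definition lat :: "int \<Rightarrow> int \<Rightarrow> complex" where
  "lat a b = of_int a * b1 + of_int b * b2"

definition klat :: "int \<Rightarrow> int \<Rightarrow> complex" where
  "klat a b = q1 + lat a b"

definition LamK :: "complex set" where
  "LamK = (\<lambda>g. q1 + g) ` LamStar"

lemma lat_eq: "lat a b = Complex ((a - b) * sqrt 3 / 2) (3 * (a + b) / 2)"
  by (simp add: lat_def b1_def b2_def complex_eq_iff algebra_simps)

lemma klat_eq: "klat a b = Complex ((a - b) * sqrt 3 / 2) (3 * (a + b) / 2 - 1)"
  by (simp add: klat_def lat_eq q1_def complex_eq_iff)

lemma norm_lat_sq: "(cmod (lat a b))\<^sup>2 = 3 * (a\<^sup>2 + a * b + b\<^sup>2)"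
  unfolding lat_eq cmod_power2 complex.sel by (simp add: field_simps power2_eq_square)

lemma norm_klat_sq: "(cmod (klat a b))\<^sup>2 = 3 * (a\<^sup>2 + a * b + b\<^sup>2 - a - b) + 1"
  unfolding klat_eq cmod_power2 complex.sel by (simp add: field_simps power2_eq_square)

lemma lat_eq_iff: "lat a b = lat c d \<longleftrightarrow> a = c \<and> b = d"
  by (simp add: lat_eq complex_eq_iff) (smt (verit) of_int_eq_iff of_int_add of_int_diff)

lemma klat_eq_iff: "klat a b = klat c d \<longleftrightarrow> a = c \<and> b = d"
  by (simp add: klat_def lat_eq_iff)

lemma lat_neq_klat: "lat a b \<noteq> klat c d"
proof
  assume "lat a b = klat c d"
  then have "3 * (a + b) = 3 * (c + d) - (2::real)"
    by (simp add: lat_eq klat_eq complex_eq_iff field_simps)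
  then have "3 * (a + b) = 3 * (c + d) - (2::int)" by linarith
  then show False by presburger
qed

lemma LamStar_iff: "p \<in> LamStar \<longleftrightarrow> (\<exists>a b. p = lat a b)"
  by (auto simp: LamStar_def lat_def)

lemma LamK_iff: "p \<in> LamK \<longleftrightarrow> (\<exists>a b. p = klat a b)"
  unfolding LamK_def klat_def using LamStar_iff by (auto simp: image_iff)

lemma freq_eq: "freq j = (if even j then LamStar else LamK)"
  by (simp add: freq_def LamK_def)

lemma zero_in_LamStar: "0 \<in> LamStar"
  by (metis LamStar_iff lat_def mult_zero_left of_int_0 add_0)

lemma zero_notin_LamK: "0 \<notin> LamK"
  by (metis LamK_iff lat_neq_klat lat_def mult_zero_left of_int_0 add_0)

lemma LamStar_disjoint_LamK: "p \<in> LamStar \<Longrightarrow> p \<notin> LamK"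
  using lat_neq_klat by (auto simp: LamStar_iff LamK_iff)

lemma rot_lat: "cis phi * lat a b = lat (- a - b) a" "cis (- phi) * lat a b = lat b (- a - b)"
  by (simp_all add: cis_phi cis_minus_phi lat_eq complex_eq_iff field_simps)

lemma rot_klat: "cis phi * klat a b = klat (1 - a - b) a" "cis (- phi) * klat a b = klat b (1 - a - b)"
  by (simp_all add: cis_phi cis_minus_phi klat_eq complex_eq_iff field_simps)

lemma rot_mem_LamStar: "cis phi * p \<in> LamStar \<longleftrightarrow> p \<in> LamStar"
  by (rule rot_mem_iff_if_invariant) (metis LamStar_iff rot_lat)+

lemma rot_mem_LamK: "cis phi * p \<in> LamK \<longleftrightarrow> p \<in> LamK"
  by (rule rot_mem_iff_if_invariant) (metis LamK_iff rot_klat)+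

lemma orbit_klat: "orbit (klat a b) = {klat a b, klat b (1 - a - b), klat (1 - a - b) a}"
  by (simp add: orbit_eq rot_klat)

lemma extra_points_klat: "q1 - 4 * b1 + b2 = klat (-4) 1" "q1 + b1 - 4 * b2 = klat 1 (-4)"
  by (simp_all add: klat_def lat_def)

lemma less_3_cases: "(k::nat) < 3 \<Longrightarrow> k = 0 \<or> k = 1 \<or> k = 2"
  by linarith

definition qv_offset :: "nat \<Rightarrow> int \<times> int" where
  "qv_offset k = [(0, 0), (1, 0), (0, 1)] ! k"

lemma lat_plus_qv: "k < 3 \<Longrightarrow> lat a b + qv k = klat (a + fst (qv_offset k)) (b + snd (qv_offset k))"
  by (auto dest!: less_3_cases simp: qv_def qv_offset_def q2_def q3_def klat_def lat_def algebra_simps)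

lemma klat_minus_qv: "k < 3 \<Longrightarrow> klat a b - qv k = lat (a - fst (qv_offset k)) (b - snd (qv_offset k))"
  using lat_plus_qv [of k "a - fst (qv_offset k)" "b - snd (qv_offset k)"] by (simp add: algebra_simps)

lemma plus_qv_mem_LamK_iff: "k < 3 \<Longrightarrow> p + qv k \<in> LamK \<longleftrightarrow> p \<in> LamStar"
proof
  assume k: "k < 3" and "p + qv k \<in> LamK"
  then obtain a b where "p = klat a b - qv k" by (auto simp: LamK_iff algebra_simps)
  then show "p \<in> LamStar" using klat_minus_qv [OF k] by (auto simp: LamStar_iff)
next
  assume k: "k < 3" and "p \<in> LamStar"
  then show "p + qv k \<in> LamK" using lat_plus_qv [OF k] by (auto simp: LamStar_iff LamK_iff)
qed

lemma rot_qv: "cis phi * qv 0 = qv 1" "cis phi * qv 1 = qv 2" "cis phi * qv 2 = qv 0"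
  by (simp_all add: qv_def q1_def q2_def q3_def b1_def b2_def cis_phi complex_eq_iff field_simps)

lemma wv_eq: "wv 0 = 1" "wv 1 = cis phi" "wv 2 = cis (- phi)"
  by (simp_all add: wv_def numeral_2_eq_2)

section \<open>Rotation-invariant trigonometric polynomials and the operators\<close>

definition flip :: "nat \<Rightarrow> nat" where
  "flip j = (if j < 2 then j + 2 else if j < 4 then j - 2 else j)"

definition H0_symbol :: "nat \<Rightarrow> complex \<Rightarrow> complex" where
  "H0_symbol j p = (if j < 2 then cnj p else p)"

definition neighbour :: "nat \<times> complex \<Rightarrow> nat \<Rightarrow> nat \<times> complex" where
  "neighbour x k = (3 - fst x, if even (fst x) then snd x + qv k else snd x - qv k)"

definition H1_coeff :: "nat \<Rightarrow> nat \<Rightarrow> complex" where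
  "H1_coeff j k = (if j < 2 then cnj (wv k) else wv k)"

lemma flip_flip: "flip (flip j) = j"
  unfolding flip_def by (auto split: if_splits)

lemma flip_less_4_iff: "flip j < 4 \<longleftrightarrow> j < 4"
  unfolding flip_def by (auto split: if_splits)

lemma even_flip_iff: "even (flip j) \<longleftrightarrow> even j"
  by (auto simp: flip_def dvd_diff_nat)

lemma H0_eq: "H0 c j p = (if j < 4 then H0_symbol j p * c (flip j) p else 0)"
proof (cases "j < 4")
  case True
  then consider "j = 0" | "j = 1" | "j = 2" | "j = 3" by linarith
  then show ?thesis by cases (simp_all add: H0_def H0_symbol_def flip_def eval_nat_numeral)
qed (simp add: H0_def)

lemma neighbour_neighbour: "fst x < 4 \<Longrightarrow> neighbour (neighbour x k) k = x"
  by (cases x) (auto simp: neighbour_def)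

lemma H1_eq:
  "H1 c j p = (if j < 4 then \<Sum>k<3. H1_coeff j k * case_prod c (neighbour (j, p) k) else 0)"
proof (cases "j < 4")
  case True
  then consider "j = 0" | "j = 1" | "j = 2" | "j = 3" by linarith
  then show ?thesis by cases (simp_all add: H1_def H1_coeff_def neighbour_def)
qed (simp add: H1_def)

lemma sum_lessThan_3: "(\<Sum>k<3. f k) = f 0 + f 1 + f (2::nat)"
  by (simp add: eval_nat_numeral)

lemma norm_H1_coeff: "k < 3 \<Longrightarrow> cmod (H1_coeff j k) = 1"
  by (auto dest!: less_3_cases simp: H1_coeff_def wv_def)

definition phase :: "nat \<Rightarrow> complex" where
  "phase j = (if 2 \<le> j then cis phi else 1)"

definition rotinv :: "coeff \<Rightarrow> bool" where
  "rotinv c \<longleftrightarrow> (\<forall>j p. c j (cis phi * p) = phase j * c j p)"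

definition modes :: "(nat \<times> complex) set" where
  "modes = {(j, p). j < 4 \<and> p \<in> freq j}"

definition trigpoly :: "coeff \<Rightarrow> bool" where
  "trigpoly c \<longleftrightarrow> finite (supp c) \<and> supp c \<subseteq> modes \<and> rotinv c"

lemma Rot_eq_iff_rotinv: "Rot c = c \<longleftrightarrow> rotinv c"
proof -
  have rot: "cis (- phi) * x = y \<longleftrightarrow> x = cis phi * y" for x y
    using rot_inverse [of x] rot_inverse [of y] by metis
  show ?thesis
    unfolding Rot_def rotinv_def phase_def fun_eq_iff
    by (intro iff_allI) (simp add: rot)
qed

lemma L2K1_iff:
  "c \<in> L2K1 \<longleftrightarrow>
     supp c \<subseteq> modes \<and> rotinv c \<and> (\<lambda>(j, p). (cmod (c j p))\<^sup>2) summable_on UNIV"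
  by (auto simp: L2K1_def L2K_def modes_def subset_iff Rot_eq_iff_rotinv)

lemma trigpoly_iff: "trigpoly c \<longleftrightarrow> c \<in> L2K1 \<and> finite (supp c)"
  by (auto simp: trigpoly_def L2K1_iff intro: summable_on_if_zero_outside [of "supp c"])

lemma trigpoly_domH0: "trigpoly c \<Longrightarrow> c \<in> domH0"
  by (auto simp: domH0_def trigpoly_iff intro: summable_on_if_zero_outside [of "supp c"])

lemma rotinv_minus:
  assumes "rotinv c"
  shows "c j (cis (- phi) * p) = (if 2 \<le> j then cis (- phi) else 1) * c j p"
proof -
  have c: "c j p = phase j * c j (cis (- phi) * p)"
    using assms rot_inverse(2) [of p] unfolding rotinv_def by metis
  show ?thesis
  proof (cases "2 \<le> j")
    case True
    with c have "cis (- phi) * c j p = c j (cis (- phi) * p)"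
      by (simp add: phase_def rot_inverse(1))
    with True show ?thesis by simp
  qed (use c in \<open>simp add: phase_def\<close>)
qed

lemma rotinv_at_zero:
  assumes "supp c \<subseteq> modes" "rotinv c" "j \<noteq> 0"
  shows "c j 0 = 0"
proof (cases "2 \<le> j")
  case True
  have "c j 0 = cis phi * c j 0"
    using assms(2) True by (metis mult_zero_right phase_def rotinv_def)
  moreover have "cis phi \<noteq> 1"
    by (simp add: cis_phi complex_eq_iff)
  ultimately show ?thesis by auto
next
  case False
  then have "odd j" using assms(3) by presburger
  then have "(j, 0) \<notin> modes"
    using zero_notin_LamK by (simp add: modes_def freq_eq)
  then show ?thesis by (rule supp_subset_zero [OF assms(1)])
qed

lemma trigpoly_add:
  assumes "trigpoly c" "trigpoly d"
  shows "trigpoly (\<lambda>j p. c j p + d j p)"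
proof -
  have supp: "supp (\<lambda>j p. c j p + d j p) \<subseteq> supp c \<union> supp d" by auto
  have "finite (supp (\<lambda>j p. c j p + d j p))"
    using assms finite_subset [OF supp] by (simp add: trigpoly_def)
  moreover have "supp (\<lambda>j p. c j p + d j p) \<subseteq> modes"
    using assms supp unfolding trigpoly_def by blast
  moreover have "rotinv (\<lambda>j p. c j p + d j p)"
    using assms by (simp add: trigpoly_def rotinv_def distrib_left)
  ultimately show ?thesis by (simp add: trigpoly_def)
qed

lemma trigpoly_scale:
  assumes "trigpoly c"
  shows "trigpoly (\<lambda>j p. z * c j p)"
proof -
  have supp: "supp (\<lambda>j p. z * c j p) \<subseteq> supp c" by auto
  have "finite (supp (\<lambda>j p. z * c j p))"
    using assms finite_subset [OF supp] by (simp add: trigpoly_def)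
  moreover have "supp (\<lambda>j p. z * c j p) \<subseteq> modes"
    using assms supp unfolding trigpoly_def by blast
  moreover have "rotinv (\<lambda>j p. z * c j p)"
    using assms by (simp add: trigpoly_def rotinv_def mult.left_commute)
  ultimately show ?thesis by (simp add: trigpoly_def)
qed

lemma trigpoly_sum:
  "finite I \<Longrightarrow> (\<And>i. i \<in> I \<Longrightarrow> trigpoly (f i)) \<Longrightarrow> trigpoly (\<lambda>j p. \<Sum>i\<in>I. f i j p)"
proof (induction I rule: finite_induct)
  case empty
  then show ?case by (simp add: trigpoly_def rotinv_def supp_def)
next
  case (insert i I)
  then show ?case using trigpoly_add [of "f i" "\<lambda>j p. \<Sum>i\<in>I. f i j p"] by simp
qed

lemma trigpoly_uminus: "trigpoly c \<Longrightarrow> trigpoly (- c)"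
  using trigpoly_scale [of c "-1"] by (simp add: fun_Compl_def)

lemma trigpoly_restrict_coeff:
  assumes "trigpoly c" "\<And>j p. (j, cis phi * p) \<in> A \<longleftrightarrow> (j, p) \<in> A"
  shows "trigpoly (restrict_coeff A c)"
proof -
  have "supp (restrict_coeff A c) \<subseteq> supp c"
    by (auto simp: restrict_coeff_def split: if_splits)
  moreover have "rotinv (restrict_coeff A c)"
    using assms by (simp add: trigpoly_def rotinv_def restrict_coeff_def)
  ultimately show ?thesis
    using assms(1) by (meson finite_subset order_trans trigpoly_def)
qed

lemma less_4_cases: "(j::nat) < 4 \<longleftrightarrow> j \<in> {0, 1, 2, 3}"
  by auto

lemma less_4_even_iff: "(j::nat) < 4 \<and> even j \<longleftrightarrow> j \<in> {0, 2}"
  unfolding less_4_cases by auto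

lemma less_4_odd_iff: "(j::nat) < 4 \<and> odd j \<longleftrightarrow> j \<in> {1, 3}"
  unfolding less_4_cases by auto

lemma mem_modes_lat_iff: "(j, lat a b) \<in> modes \<longleftrightarrow> j \<in> {0, 2}"
proof -
  have "lat a b \<in> LamStar" "lat a b \<notin> LamK"
    using LamStar_disjoint_LamK by (auto simp: LamStar_iff)
  then show ?thesis using less_4_even_iff [of j] by (auto simp: modes_def freq_eq)
qed

lemma mem_modes_klat_iff: "(j, klat a b) \<in> modes \<longleftrightarrow> j \<in> {1, 3}"
proof -
  have "klat a b \<in> LamK" "klat a b \<notin> LamStar"
    using LamStar_disjoint_LamK by (auto simp: LamK_iff)
  then show ?thesis using less_4_odd_iff [of j] by (auto simp: modes_def freq_eq)
qed

lemma modes_cases: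
  assumes "x \<in> modes"
  obtains j a b where "x = (j, lat a b)" "j \<in> {0, 2}" | j a b where "x = (j, klat a b)" "j \<in> {1, 3}"
proof -
  obtain j p where x: "x = (j, p)" "j < 4" "p \<in> freq j"
    using assms by (auto simp: modes_def)
  show ?thesis
  proof (cases "even j")
    case True
    then have "j \<in> {0, 2}" using x(2) by (auto elim!: evenE)
    then show ?thesis using x True that(1) by (auto simp: freq_eq LamStar_iff)
  next
    case False
    then have "j \<in> {1, 3}" using x(2) by (auto elim!: oddE)
    then show ?thesis using x False that(2) by (auto simp: freq_eq LamK_iff)
  qed
qed

lemma rot_mem_modes_iff: "(j, cis phi * p) \<in> modes \<longleftrightarrow> (j, p) \<in> modes"
  by (simp add: modes_def freq_eq rot_mem_LamStar rot_mem_LamK)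

lemma mem_modes_orbit_iff: "q \<in> orbit p \<Longrightarrow> (j, q) \<in> modes \<longleftrightarrow> (j, p) \<in> modes"
  using invariant_mem_orbit_iff [of "{p. (j, p) \<in> modes}"] rot_mem_modes_iff by blast

lemma neighbour_mem_modes_iff:
  assumes "fst x < 4" "k < 3"
  shows "neighbour x k \<in> modes \<longleftrightarrow> x \<in> modes"
  using plus_qv_mem_LamK_iff [OF assms(2), of "snd x"]
    plus_qv_mem_LamK_iff [OF assms(2), of "snd x - qv k"] assms(1)
  by (cases x) (auto simp: neighbour_def modes_def freq_eq)

lemma neighbour_lat: "j \<in> {0, 2} \<Longrightarrow> k < 3 \<Longrightarrow>
    neighbour (j, lat a b) k = (3 - j, klat (a + fst (qv_offset k)) (b + snd (qv_offset k)))"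
  by (auto simp: neighbour_def lat_plus_qv)

lemma neighbour_klat: "j \<in> {1, 3} \<Longrightarrow> k < 3 \<Longrightarrow>
    neighbour (j, klat a b) k = (3 - j, lat (a - fst (qv_offset k)) (b - snd (qv_offset k)))"
  by (auto simp: neighbour_def klat_minus_qv)

lemma H1_nonzero:
  assumes "H1 c j p \<noteq> 0"
  shows "j < 4 \<and> (\<exists>k<3. neighbour (j, p) k \<in> supp c)"
proof (cases "j < 4")
  case True
  with assms have "(\<Sum>k<3. H1_coeff j k * case_prod c (neighbour (j, p) k)) \<noteq> 0"
    by (simp add: H1_eq)
  then obtain k where "k < 3" "case_prod c (neighbour (j, p) k) \<noteq> 0"
    by (rule sum.not_neutral_contains_not_neutral) auto
  with True show ?thesis by (metis case_prod_unfold mem_supp_iff prod.collapse)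
qed (use assms in \<open>simp add: H1_eq\<close>)

lemma supp_H1: "supp (H1 c) \<subseteq> (\<Union>k<3. (\<lambda>x. neighbour x k) ` supp c)"
proof
  fix x assume "x \<in> supp (H1 c)"
  then obtain j p where x: "x = (j, p)" "H1 c j p \<noteq> 0" by (cases x) auto
  with H1_nonzero obtain k where "j < 4" "k < 3" "neighbour x k \<in> supp c" by blast
  then show "x \<in> (\<Union>k<3. (\<lambda>x. neighbour x k) ` supp c)"
    using neighbour_neighbour [of x k] x(1) by (metis UN_iff fst_conv image_eqI lessThan_iff)
qed

lemma supp_H1_subset_modes:
  assumes "supp c \<subseteq> modes"
  shows "supp (H1 c) \<subseteq> modes"
proof
  fix y assume "y \<in> supp (H1 c)"
  then obtain x k where "x \<in> supp c" "k < 3" "y = neighbour x k" using supp_H1 by blast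
  moreover then have "fst x < 4" using assms by (auto simp: modes_def)
  ultimately show "y \<in> modes" using assms neighbour_mem_modes_iff by blast
qed

lemma rotinv_H1:
  assumes "rotinv c"
  shows "rotinv (H1 c)"
  unfolding rotinv_def
proof (intro allI)
  fix j :: nat and p :: complex
  have rot: "\<And>j p. c j (cis phi * p) = phase j * c j p"
    using assms by (simp add: rotinv_def)
  have shift: "cis phi * p + qv 0 = cis phi * (p + qv 2)" "cis phi * p + qv 1 = cis phi * (p + qv 0)"
    "cis phi * p + qv 2 = cis phi * (p + qv 1)" "cis phi * p - qv 0 = cis phi * (p - qv 2)"
    "cis phi * p - qv 1 = cis phi * (p - qv 0)" "cis phi * p - qv 2 = cis phi * (p - qv 1)"
    by (simp_all only: distrib_left right_diff_distrib rot_qv)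
  have "H1 c 0 (cis phi * p) = H1 c 0 p" "H1 c 1 (cis phi * p) = H1 c 1 p"
    "H1 c 2 (cis phi * p) = cis phi * H1 c 2 p" "H1 c 3 (cis phi * p) = cis phi * H1 c 3 p"
    by (simp add: H1_def sum_lessThan_3 wv_eq cis_cnj shift rot phase_def del: One_nat_def,
        simp only: cis_minus_phi_eq_square, insert cis_phi_cube, algebra)+
  moreover consider "j = 0" | "j = 1" | "j = 2" | "j = 3" | "4 \<le> j" by linarith
  ultimately show "H1 c j (cis phi * p) = phase j * H1 c j p"
    by cases (simp_all add: phase_def H1_def)
qed

lemma trigpoly_H1:
  assumes "trigpoly c"
  shows "trigpoly (H1 c)"
proof -
  have "finite (\<Union>k<3. (\<lambda>x. neighbour x k) ` supp c)"
    using assms by (simp add: trigpoly_def)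
  then show ?thesis
    using assms supp_H1 supp_H1_subset_modes rotinv_H1 finite_subset
    by (metis trigpoly_def)
qed

text \<open>At p = 0 the division by zero yields 0, which is the value required on the range of Pperp.\<close>

definition H0inv :: "coeff \<Rightarrow> coeff" where
  "H0inv c = (\<lambda>j p. if j < 4 then c (flip j) p / H0_symbol (flip j) p else 0)"

lemma flip_mem_modes_iff: "(flip j, p) \<in> modes \<longleftrightarrow> (j, p) \<in> modes"
  by (simp add: modes_def flip_less_4_iff freq_eq even_flip_iff)

lemma supp_H0inv: "supp (H0inv c) \<subseteq> (\<lambda>(j, p). (flip j, p)) ` supp c"
proof
  fix x assume "x \<in> supp (H0inv c)"
  then obtain j p where "x = (j, p)" "c (flip j) p \<noteq> 0"
    by (cases x) (auto simp: H0inv_def split: if_splits)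
  then show "x \<in> (\<lambda>(j, p). (flip j, p)) ` supp c"
    by (auto simp: image_iff flip_flip intro!: bexI [of _ "(flip j, p)"])
qed

lemma rotinv_H0inv:
  assumes "rotinv c"
  shows "rotinv (H0inv c)"
  unfolding rotinv_def
proof (intro allI)
  fix j :: nat and p :: complex
  have "inverse (cnj (cis phi)) = cis phi"
    by (simp add: cis_cnj)
  then have "x / (cnj (cis phi) * y) = cis phi * x / y" for x y :: complex
    by (simp add: divide_inverse ac_simps)
  then show "H0inv c j (cis phi * p) = phase j * H0inv c j p"
    using assms by (auto simp: H0inv_def rotinv_def H0_symbol_def phase_def flip_def)
qed

lemma trigpoly_H0inv:
  assumes "trigpoly c"
  shows "trigpoly (H0inv c)"
proof -
  have "finite ((\<lambda>(j, p). (flip j, p)) ` supp c)"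
    using assms by (simp add: trigpoly_def)
  moreover have "(\<lambda>(j, p). (flip j, p)) ` supp c \<subseteq> modes"
    using assms flip_mem_modes_iff by (auto simp: trigpoly_def)
  ultimately show ?thesis
    using assms supp_H0inv rotinv_H0inv finite_subset by (metis order_trans trigpoly_def)
qed

lemma H0_H0inv:
  assumes "supp c \<subseteq> modes" "\<And>j. c j 0 = 0"
  shows "H0 (H0inv c) = c"
proof (intro ext)
  fix j p
  have "j \<ge> 4 \<Longrightarrow> c j p = 0"
    using supp_subset_zero [OF assms(1)] by (simp add: modes_def)
  then show "H0 (H0inv c) j p = c j p"
    using assms(2) by (cases "p = 0") (auto simp: H0_eq H0inv_def H0_symbol_def flip_flip
        flip_less_4_iff)
qed

lemma H0inv_H0:
  assumes "supp d \<subseteq> modes" "\<And>j. d j 0 = 0"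
  shows "H0inv (H0 d) = d"
proof (intro ext)
  fix j p
  have "j \<ge> 4 \<Longrightarrow> d j p = 0"
    using supp_subset_zero [OF assms(1)] by (simp add: modes_def)
  then show "H0inv (H0 d) j p = d j p"
    using assms(2) by (cases "p = 0") (auto simp: H0_eq H0inv_def H0_symbol_def flip_flip
        flip_less_4_iff)
qed

lemma norm_H0_sq:
  assumes "supp f \<subseteq> modes"
  shows "(cmod (H0 f j p))\<^sup>2 = (\<lambda>(j, p). (cmod p * cmod (f j p))\<^sup>2) (flip j, p)"
proof (cases "j < 4")
  case False
  then have "f j p = 0" using supp_subset_zero [OF assms] by (simp add: modes_def)
  with False show ?thesis by (simp add: H0_eq flip_def)
qed (simp add: H0_eq H0_symbol_def norm_mult)

lemma infsum_norm_H0_sq: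
  assumes "supp f \<subseteq> modes"
  shows "(\<Sum>\<^sub>\<infinity>(j, p). (cmod (H0 f j p))\<^sup>2) = (\<Sum>\<^sub>\<infinity>(j, p). (cmod p * cmod (f j p))\<^sup>2)"
proof -
  have "bij (\<lambda>(j, p). (flip j, p :: complex))"
    by (rule bij_betw_byWitness [where f' = "\<lambda>(j, p). (flip j, p)"]) (auto simp: flip_flip)
  then show ?thesis
    using infsum_reindex_bij_betw [of "\<lambda>(j, p). (flip j, p)" UNIV UNIV
        "\<lambda>(j, p). (cmod p * cmod (f j p))\<^sup>2"]
    by (simp add: case_prod_unfold norm_H0_sq [OF assms])
qed

section \<open>The Rayleigh-Schroedinger terms\<close>

lemma P_eq: "P c = restrict_coeff {(0, 0)} c"
  unfolding P_def
proof (rule orth_proj_eq_restrict)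
  have "restrict_coeff {(0, 0)} c = (\<lambda>j p. (c 0 0 * sqrt Vol) * Psi0 j p)"
    using Vol_pos by (auto simp: restrict_coeff_def Psi0_def fun_eq_iff)
  then show "restrict_coeff {(0, 0)} c \<in> cspan {Psi0}"
    by (simp add: cspan_scale cspan_base)
qed (auto simp: supp_def Psi0_def split: if_splits)

lemma Pperp_eq: "Pperp c = restrict_coeff (- {(0, 0)}) c"
  by (simp add: Pperp_def P_eq restrict_coeff_def fun_eq_iff)

lemma trigpoly_Pperp: "trigpoly c \<Longrightarrow> trigpoly (Pperp c)"
  unfolding Pperp_eq by (rule trigpoly_restrict_coeff) auto

lemma H0inv_perp_eq:
  assumes "trigpoly c" "c 0 0 = 0"
  shows "H0inv_perp c = H0inv c"
  unfolding H0inv_perp_def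
proof (rule the_equality)
  have c0: "c j 0 = 0" for j
    using assms rotinv_at_zero [of c j] by (cases "j = 0") (auto simp: trigpoly_def)
  have "H0inv c \<in> domH0"
    by (rule trigpoly_domH0 [OF trigpoly_H0inv [OF assms(1)]])
  moreover have "Pperp (H0inv c) = H0inv c"
    by (simp add: Pperp_eq restrict_coeff_def H0inv_def c0 fun_eq_iff)
  moreover have "H0 (H0inv c) = c"
    using assms(1) c0 by (intro H0_H0inv) (simp_all add: trigpoly_def)
  ultimately show "H0inv c \<in> domH0 \<and> Pperp (H0inv c) = H0inv c \<and> H0 (H0inv c) = c"
    by blast
  fix d assume d: "d \<in> domH0 \<and> Pperp d = d \<and> H0 d = c"
  then have modes: "supp d \<subseteq> modes" and "rotinv d"
    by (simp_all add: domH0_def L2K1_iff)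
  have "d 0 0 = Pperp d 0 0" using d by simp
  also have "\<dots> = 0" by (simp add: Pperp_eq restrict_coeff_def)
  finally have "d j 0 = 0" for j
    using rotinv_at_zero [OF modes \<open>rotinv d\<close>, of j] by (cases "j = 0") auto
  then have "H0inv (H0 d) = d" by (rule H0inv_H0 [OF modes])
  then show "d = H0inv c" using d by simp
qed

lemma pinvH0_eq:
  assumes "trigpoly c"
  shows "pinvH0 c = H0inv (Pperp c)"
proof -
  have "H0inv_perp (Pperp c) = H0inv (Pperp c)"
    by (rule H0inv_perp_eq [OF trigpoly_Pperp [OF assms]]) (simp add: Pperp_eq restrict_coeff_def)
  moreover have "Pperp (H0inv (Pperp c)) = H0inv (Pperp c)"
    by (auto simp: Pperp_eq restrict_coeff_def H0inv_def H0_symbol_def fun_eq_iff)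
  ultimately show ?thesis by (simp add: pinvH0_def)
qed

lemma trigpoly_Psi0: "trigpoly Psi0"
proof -
  have "supp Psi0 \<subseteq> {(0, 0)}"
    by (auto simp: Psi0_def split: if_splits)
  moreover have "{(0::nat, 0::complex)} \<subseteq> modes"
    using zero_in_LamStar by (simp add: modes_def freq_eq)
  moreover have "rotinv Psi0"
    by (simp add: rotinv_def phase_def Psi0_def)
  ultimately show ?thesis
    by (meson finite.emptyI finite_insert finite_subset order_trans trigpoly_def)
qed

lemma trigpoly_Psi: "trigpoly (Psi n)"
proof (induction n)
  case (Suc n)
  then have "Psi (Suc n) = - H0inv (Pperp (H1 (Psi n)))"
    using pinvH0_eq trigpoly_H1 by simp
  then show ?case
    using Suc trigpoly_uminus trigpoly_H0inv trigpoly_Pperp trigpoly_H1 by metis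
qed (simp add: trigpoly_Psi0)

lemma Psi_Suc_eq: "Psi (Suc n) = - H0inv (Pperp (H1 (Psi n)))"
  using pinvH0_eq trigpoly_H1 trigpoly_Psi by simp

lemma supp_Psi_Suc:
  "supp (Psi (Suc n)) \<subseteq> {(flip (fst (neighbour x k)), snd (neighbour x k)) | x k. x \<in> supp (Psi n) \<and> k < 3}"
proof
  fix y assume "y \<in> supp (Psi (Suc n))"
  then have "y \<in> supp (H0inv (Pperp (H1 (Psi n))))"
    by (cases y) (simp add: Psi_Suc_eq del: Psi.simps)
  then obtain z where z: "z \<in> supp (Pperp (H1 (Psi n)))" "y = (flip (fst z), snd z)"
    using supp_H0inv by fastforce
  then have "z \<in> supp (H1 (Psi n))"
    by (cases z) (auto simp: Pperp_eq restrict_coeff_def split: if_splits)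
  then obtain x k where "x \<in> supp (Psi n)" "k < 3" "z = neighbour x k"
    using supp_H1 by blast
  with z(2) show "y \<in> {(flip (fst (neighbour x k)), snd (neighbour x k)) | x k. x \<in> supp (Psi n) \<and> k < 3}"
    by blast
qed

section \<open>The modes carried by Xi\<close>

definition Xi_lat :: "int \<Rightarrow> int \<Rightarrow> bool" where
  "Xi_lat a b \<longleftrightarrow> a\<^sup>2 + a * b + b\<^sup>2 \<le> 16"

text \<open>The six extra points are the orbits of q1 - 4 b1 + b2 and q1 + b1 - 4 b2.\<close>

definition Xi_klat :: "int \<Rightarrow> int \<Rightarrow> bool" where
  "Xi_klat a b \<longleftrightarrow> a\<^sup>2 + a * b + b\<^sup>2 - a - b \<le> 15
     \<or> (a, b) \<in> {(-4, 1), (1, 4), (4, -4), (1, -4), (-4, 4), (4, 1)}"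

definition Xi_modes :: "(nat \<times> complex) set" where
  "Xi_modes = {(j, p) \<in> modes. (cmod p)\<^sup>2 \<le> 48 \<or> p \<in> orbit (q1 - 4 * b1 + b2) \<union> orbit (q1 + b1 - 4 * b2)}"

lemma mem_Xi_modes_lat_iff: "(j, lat a b) \<in> Xi_modes \<longleftrightarrow> j \<in> {0, 2} \<and> Xi_lat a b"
proof -
  have "lat a b \<notin> orbit (q1 - 4 * b1 + b2) \<union> orbit (q1 + b1 - 4 * b2)"
    using lat_neq_klat by (simp add: extra_points_klat orbit_klat)
  moreover have "3 * X \<le> (48::int) \<longleftrightarrow> X \<le> 16" for X :: int by arith
  then have "(cmod (lat a b))\<^sup>2 \<le> 48 \<longleftrightarrow> Xi_lat a b"
    by (simp only: norm_lat_sq Xi_lat_def of_int_le_numeral_iff)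
  ultimately show ?thesis
    by (auto simp: Xi_modes_def mem_modes_lat_iff)
qed

lemma mem_Xi_modes_klat_iff: "(j, klat a b) \<in> Xi_modes \<longleftrightarrow> j \<in> {1, 3} \<and> Xi_klat a b"
proof -
  have "klat a b \<in> orbit (q1 - 4 * b1 + b2) \<union> orbit (q1 + b1 - 4 * b2)
      \<longleftrightarrow> (a, b) \<in> {(-4, 1), (1, 4), (4, -4), (1, -4), (-4, 4), (4, 1)}"
    by (auto simp: extra_points_klat orbit_klat klat_eq_iff)
  moreover have "3 * X + 1 \<le> (48::int) \<longleftrightarrow> X \<le> 15" for X :: int by arith
  then have "(cmod (klat a b))\<^sup>2 \<le> 48 \<longleftrightarrow> a\<^sup>2 + a * b + b\<^sup>2 - a - b \<le> 15"
    by (simp only: norm_klat_sq of_int_le_numeral_iff)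
  ultimately show ?thesis
    by (auto simp: Xi_modes_def Xi_klat_def mem_modes_klat_iff)
qed

lemma square_ge_5_abs: "5 \<le> \<bar>a::int\<bar> \<Longrightarrow> 5 * \<bar>a\<bar> \<le> a\<^sup>2"
  by (metis abs_ge_zero abs_mult_self_eq mult_right_mono power2_eq_square)

lemma Xi_lat_bound: "Xi_lat a b \<Longrightarrow> \<bar>a\<bar> \<le> 4 \<and> \<bar>b\<bar> \<le> 4"
proof -
  have bound: "\<bar>x\<bar> \<le> 4" if "x\<^sup>2 + x * y + y\<^sup>2 \<le> 16" for x y :: int
  proof (rule ccontr)
    assume "\<not> \<bar>x\<bar> \<le> 4"
    then have "5 * \<bar>x\<bar> \<le> x\<^sup>2" by (intro square_ge_5_abs) linarith
    moreover have "4 * (x\<^sup>2 + x * y + y\<^sup>2) = (x + 2 * y)\<^sup>2 + 3 * x\<^sup>2"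
      by (simp add: power2_eq_square algebra_simps)
    moreover have "(x + 2 * y)\<^sup>2 \<ge> 0" by simp
    ultimately show False using that \<open>\<not> \<bar>x\<bar> \<le> 4\<close> by (smt (verit))
  qed
  show "Xi_lat a b \<Longrightarrow> ?thesis"
    using bound [of a b] bound [of b a] by (simp add: Xi_lat_def algebra_simps)
qed

lemma Xi_klat_bound: "Xi_klat a b \<Longrightarrow> \<bar>a\<bar> \<le> 4 \<and> \<bar>b\<bar> \<le> 4"
proof -
  have bound: "\<bar>x\<bar> \<le> 4" if "x\<^sup>2 + x * y + y\<^sup>2 - x - y \<le> 15" for x y :: int
  proof (rule ccontr)
    assume "\<not> \<bar>x\<bar> \<le> 4"
    then have "5 * \<bar>x\<bar> \<le> x\<^sup>2" by (intro square_ge_5_abs) linarith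
    moreover have "4 * (x\<^sup>2 + x * y + y\<^sup>2 - x - y) = (x + 2 * y - 1)\<^sup>2 + 3 * x\<^sup>2 - 2 * x - 1"
      by (simp add: power2_eq_square algebra_simps)
    moreover have "(x + 2 * y - 1)\<^sup>2 \<ge> 0" "x \<le> \<bar>x\<bar>" by simp_all
    ultimately show False using that \<open>\<not> \<bar>x\<bar> \<le> 4\<close> by (smt (verit))
  qed
  show "Xi_klat a b \<Longrightarrow> ?thesis"
    using bound [of a b] bound [of b a] by (auto simp: Xi_klat_def algebra_simps)
qed

lemma Xi_modes_subset_modes: "Xi_modes \<subseteq> modes"
  by (auto simp: Xi_modes_def)

lemma finite_Xi_modes: "finite Xi_modes"
proof -
  let ?B = "{-4..4::int} \<times> {-4..4::int}"
  have "Xi_modes \<subseteq> {0..3} \<times> (case_prod lat ` ?B \<union> case_prod klat ` ?B)"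
  proof
    fix x assume x: "x \<in> Xi_modes"
    with Xi_modes_subset_modes have "x \<in> modes" by blast
    then show "x \<in> {0..3} \<times> (case_prod lat ` ?B \<union> case_prod klat ` ?B)"
    proof (cases rule: modes_cases)
      case (1 j a b)
      then have "(a, b) \<in> ?B" "j \<le> 3"
        using x Xi_lat_bound [of a b] by (auto simp: mem_Xi_modes_lat_iff)
      then show ?thesis using 1 by (auto intro: rev_image_eqI)
    next
      case (2 j a b)
      then have "(a, b) \<in> ?B" "j \<le> 3"
        using x Xi_klat_bound [of a b] by (auto simp: mem_Xi_modes_klat_iff)
      then show ?thesis using 2 by (auto intro: rev_image_eqI)
    qed
  qed
  then show ?thesis by (rule finite_subset) simp
qed

lemma rot_mem_Xi_modes_iff: "(j, cis phi * p) \<in> Xi_modes \<longleftrightarrow> (j, p) \<in> Xi_modes"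
  by (simp add: Xi_modes_def rot_mem_modes_iff rot_mem_orbit_iff norm_mult)

lemma mem_Xi_modes_orbit_iff: "q \<in> orbit p \<Longrightarrow> (j, q) \<in> Xi_modes \<longleftrightarrow> (j, p) \<in> Xi_modes"
  using invariant_mem_orbit_iff [of "{p. (j, p) \<in> Xi_modes}"] rot_mem_Xi_modes_iff by blast

lemma norm_sq_ge_49_outside_Xi_modes:
  assumes "x \<in> modes" "x \<notin> Xi_modes"
  shows "49 \<le> (cmod (snd x))\<^sup>2"
  using assms(1)
proof (cases rule: modes_cases)
  case (1 j a b)
  then have "\<not> Xi_lat a b" using assms(2) mem_Xi_modes_lat_iff by blast
  then have "49 \<le> 3 * (a\<^sup>2 + a * b + b\<^sup>2)" by (simp add: Xi_lat_def)
  then have "(49::real) \<le> of_int (3 * (a\<^sup>2 + a * b + b\<^sup>2))"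
    by (metis of_int_le_iff of_int_numeral)
  with 1 show ?thesis by (simp only: norm_lat_sq snd_conv)
next
  case (2 j a b)
  then have "\<not> Xi_klat a b" using assms(2) mem_Xi_modes_klat_iff by blast
  then have "49 \<le> 3 * (a\<^sup>2 + a * b + b\<^sup>2 - a - b) + 1" by (simp add: Xi_klat_def)
  then have "(49::real) \<le> of_int (3 * (a\<^sup>2 + a * b + b\<^sup>2 - a - b) + 1)"
    by (metis of_int_le_iff of_int_numeral)
  with 2 show ?thesis by (simp only: norm_klat_sq snd_conv)
qed

lemma lat_crossings:
  "(Xi_klat a b = Xi_lat a b \<or> Xi_klat (a + 1) b = Xi_lat a b)
   \<and> (Xi_klat a b = Xi_lat a b \<or> Xi_klat a (b + 1) = Xi_lat a b)
   \<and> (Xi_klat (a + 1) b = Xi_lat a b \<or> Xi_klat a (b + 1) = Xi_lat a b)"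
proof (cases "a \<in> {-5..5} \<and> b \<in> {-5..5}")
  case True
  have "\<forall>a\<in>{-5..5::int}. \<forall>b\<in>{-5..5::int}.
      (Xi_klat a b = Xi_lat a b \<or> Xi_klat (a + 1) b = Xi_lat a b)
      \<and> (Xi_klat a b = Xi_lat a b \<or> Xi_klat a (b + 1) = Xi_lat a b)
      \<and> (Xi_klat (a + 1) b = Xi_lat a b \<or> Xi_klat a (b + 1) = Xi_lat a b)"
    by (simp add: set_upto [symmetric] upto.simps Xi_lat_def Xi_klat_def)
  then show ?thesis using True by blast
next
  case False
  then show ?thesis
    using Xi_lat_bound [of a b] Xi_klat_bound [of a b] Xi_klat_bound [of "a + 1" b]
      Xi_klat_bound [of a "b + 1"] by auto
qed

lemma klat_crossings:
  "(Xi_lat a b = Xi_klat a b \<or> Xi_lat (a - 1) b = Xi_klat a b)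
   \<and> (Xi_lat a b = Xi_klat a b \<or> Xi_lat a (b - 1) = Xi_klat a b)
   \<and> (Xi_lat (a - 1) b = Xi_klat a b \<or> Xi_lat a (b - 1) = Xi_klat a b)"
proof (cases "a \<in> {-5..5} \<and> b \<in> {-5..5}")
  case True
  have "\<forall>a\<in>{-5..5::int}. \<forall>b\<in>{-5..5::int}.
      (Xi_lat a b = Xi_klat a b \<or> Xi_lat (a - 1) b = Xi_klat a b)
      \<and> (Xi_lat a b = Xi_klat a b \<or> Xi_lat a (b - 1) = Xi_klat a b)
      \<and> (Xi_lat (a - 1) b = Xi_klat a b \<or> Xi_lat a (b - 1) = Xi_klat a b)"
    by (simp add: set_upto [symmetric] upto.simps Xi_lat_def Xi_klat_def)
  then show ?thesis using True by blast
next
  case False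
  then show ?thesis
    using Xi_klat_bound [of a b] Xi_lat_bound [of a b] Xi_lat_bound [of "a - 1" b]
      Xi_lat_bound [of a "b - 1"] by auto
qed

lemma lat_crossing_unique:
  assumes "k < 3" "k' < 3"
    and "Xi_klat (a + fst (qv_offset k)) (b + snd (qv_offset k)) \<noteq> Xi_lat a b"
    and "Xi_klat (a + fst (qv_offset k')) (b + snd (qv_offset k')) \<noteq> Xi_lat a b"
  shows "k = k'"
  using less_3_cases [OF assms(1)] less_3_cases [OF assms(2)] assms(3,4) lat_crossings [of a b]
  by (auto simp: qv_offset_def)

lemma klat_crossing_unique:
  assumes "k < 3" "k' < 3"
    and "Xi_lat (a - fst (qv_offset k)) (b - snd (qv_offset k)) \<noteq> Xi_klat a b"
    and "Xi_lat (a - fst (qv_offset k')) (b - snd (qv_offset k')) \<noteq> Xi_klat a b"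
  shows "k = k'"
  using less_3_cases [OF assms(1)] less_3_cases [OF assms(2)] assms(3,4) klat_crossings [of a b]
  by (auto simp: qv_offset_def)

lemma crossing_unique:
  assumes "x \<in> modes" "k < 3" "k' < 3"
    and "(neighbour x k \<in> Xi_modes) \<noteq> (x \<in> Xi_modes)" "(neighbour x k' \<in> Xi_modes) \<noteq> (x \<in> Xi_modes)"
  shows "k = k'"
  using assms(1)
proof (cases rule: modes_cases)
  case (1 j a b)
  then have "3 - j \<in> {1, 3}" by auto
  with 1 assms(2-5) show ?thesis
    by (intro lat_crossing_unique [of k k' a b]) (simp_all add: neighbour_lat mem_Xi_modes_lat_iff mem_Xi_modes_klat_iff)
next
  case (2 j a b)
  then have "3 - j \<in> {0, 2}" by auto
  with 2 assms(2-5) show ?thesis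
    by (intro klat_crossing_unique [of k k' a b]) (simp_all add: neighbour_klat mem_Xi_modes_lat_iff mem_Xi_modes_klat_iff)
qed

definition hex_norm :: "int \<Rightarrow> int \<Rightarrow> int" where
  "hex_norm a b = max \<bar>a\<bar> (max \<bar>b\<bar> \<bar>a + b\<bar>)"

lemma hex_norm_qv_offset_diff:
  "k < 3 \<Longrightarrow> k' < 3 \<Longrightarrow>
    hex_norm (a + fst (qv_offset k) - fst (qv_offset k')) (b + snd (qv_offset k) - snd (qv_offset k')) \<le> hex_norm a b + 1"
  by (auto dest!: less_3_cases simp: qv_offset_def hex_norm_def)

lemma hex_norm_le_4_Xi_lat: "hex_norm a b \<le> 4 \<Longrightarrow> Xi_lat a b"
proof -
  have "\<forall>a\<in>{-4..4::int}. \<forall>b\<in>{-4..4::int}. hex_norm a b \<le> 4 \<longrightarrow> Xi_lat a b"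
    by (simp add: set_upto [symmetric] upto.simps Xi_lat_def hex_norm_def)
  moreover assume "hex_norm a b \<le> 4"
  moreover from this have "a \<in> {-4..4} \<and> b \<in> {-4..4}" by (auto simp: hex_norm_def)
  ultimately show "Xi_lat a b" by blast
qed

lemma hex_norm_le_3_Xi_klat:
  assumes "hex_norm a b \<le> 3" "k < 3"
  shows "Xi_klat (a + fst (qv_offset k)) (b + snd (qv_offset k))"
proof -
  have "\<forall>a\<in>{-3..3::int}. \<forall>b\<in>{-3..3::int}.
      hex_norm a b \<le> 3 \<longrightarrow> Xi_klat a b \<and> Xi_klat (a + 1) b \<and> Xi_klat a (b + 1)"
    by (simp add: set_upto [symmetric] upto.simps Xi_klat_def hex_norm_def)
  moreover have "a \<in> {-3..3} \<and> b \<in> {-3..3}" using assms(1) by (auto simp: hex_norm_def)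
  ultimately show ?thesis
    using assms by (auto dest!: less_3_cases simp: qv_offset_def)
qed

definition hex_even :: "int \<Rightarrow> (nat \<times> complex) set" where
  "hex_even m = {(0, lat a b) | a b. hex_norm a b \<le> m}"

definition hex_odd :: "int \<Rightarrow> (nat \<times> complex) set" where
  "hex_odd m = {(1, lat a b + qv k) | a b k. k < 3 \<and> hex_norm a b \<le> m}"

lemma supp_Psi_Suc_hex_odd:
  assumes "supp (Psi n) \<subseteq> hex_even m"
  shows "supp (Psi (Suc n)) \<subseteq> hex_odd m"
proof
  fix y assume "y \<in> supp (Psi (Suc n))"
  then obtain x k where "x \<in> supp (Psi n)" "k < 3" "y = (flip (fst (neighbour x k)), snd (neighbour x k))"
    using supp_Psi_Suc by blast
  moreover from this obtain a b where "x = (0, lat a b)" "hex_norm a b \<le> m"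
    using assms by (auto simp: hex_even_def)
  ultimately show "y \<in> hex_odd m"
    by (auto simp: hex_odd_def neighbour_def flip_def)
qed

lemma supp_Psi_Suc_hex_even:
  assumes "supp (Psi n) \<subseteq> hex_odd m"
  shows "supp (Psi (Suc n)) \<subseteq> hex_even (m + 1)"
proof
  fix y assume "y \<in> supp (Psi (Suc n))"
  then obtain x k' where x: "x \<in> supp (Psi n)" "k' < 3" "y = (flip (fst (neighbour x k')), snd (neighbour x k'))"
    using supp_Psi_Suc by blast
  moreover from this obtain a b k where "x = (1, lat a b + qv k)" "k < 3" "hex_norm a b \<le> m"
    using assms by (auto simp: hex_odd_def)
  ultimately have k: "k < 3" "k' < 3" "hex_norm a b \<le> m" and y: "y = (0, lat a b + qv k - qv k')"
    by (auto simp: neighbour_def flip_def)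
  let ?a = "a + fst (qv_offset k) - fst (qv_offset k')" and ?b = "b + snd (qv_offset k) - snd (qv_offset k')"
  have "lat a b + qv k - qv k' = lat ?a ?b"
    using lat_plus_qv [OF k(1), of a b] klat_minus_qv [OF k(2), of "a + fst (qv_offset k)" "b + snd (qv_offset k)"]
    by simp
  moreover have "hex_norm ?a ?b \<le> m + 1"
    using hex_norm_qv_offset_diff [OF k(1,2), of a b] k(3) by linarith
  ultimately show "y \<in> hex_even (m + 1)"
    using y by (auto simp: hex_even_def)
qed

lemma supp_Psi_hex:
  "supp (Psi (2 * m)) \<subseteq> hex_even (int m) \<and> supp (Psi (2 * m + 1)) \<subseteq> hex_odd (int m)"
proof (induction m)
  case 0
  have "supp (Psi 0) \<subseteq> hex_even 0"
    by (auto simp: hex_even_def hex_norm_def Psi0_def lat_def split: if_splits intro!: exI [of _ 0])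
  then show ?case using supp_Psi_Suc_hex_odd [of 0 0] by (simp del: Psi.simps)
next
  case (Suc m)
  then have "supp (Psi (2 * Suc m)) \<subseteq> hex_even (int (Suc m))"
    using supp_Psi_Suc_hex_even [of "2 * m + 1" "int m"] by (simp add: add.commute del: Psi.simps)
  then show ?case
    using supp_Psi_Suc_hex_odd [of "2 * Suc m"] by (simp del: Psi.simps)
qed

lemma supp_Psi_subset_Xi_modes:
  assumes "n \<le> 8"
  shows "supp (Psi n) \<subseteq> Xi_modes"
proof (cases "even n")
  case True
  then obtain m where m: "n = 2 * m" "m \<le> 4" using assms by (auto elim!: evenE)
  have "hex_even (int m) \<subseteq> Xi_modes"
    using m(2) hex_norm_le_4_Xi_lat by (auto simp: hex_even_def mem_Xi_modes_lat_iff)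
  then show ?thesis using supp_Psi_hex [of m] m(1) by blast
next
  case False
  then obtain m where m: "n = 2 * m + 1" "m \<le> 3" using assms by (auto elim!: oddE)
  have "hex_odd (int m) \<subseteq> Xi_modes"
    using m(2) hex_norm_le_3_Xi_klat by (auto simp: hex_odd_def lat_plus_qv mem_Xi_modes_klat_iff)
  then show ?thesis using supp_Psi_hex [of m] m(1) by blast
qed

section \<open>The span of Xi\<close>

lemma chi_comp_modes: "(j, p) \<in> modes \<Longrightarrow> chi_comp p (j < 2) = j"
  using LamStar_disjoint_LamK by (auto simp: modes_def freq_eq chi_comp_def less_4_cases)

lemma chi_orbit: "q \<in> orbit p \<Longrightarrow> chi q s = chi p s"
proof -
  assume q: "q \<in> orbit p"
  then have "chi_comp q s = chi_comp p s"
    using invariant_mem_orbit_iff [OF rot_mem_LamStar] by (simp add: chi_comp_def)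
  then show ?thesis using orbit_eq_of_mem [OF q] by (simp add: chi_def)
qed

lemma supp_chi: "supp (chi p s) \<subseteq> {chi_comp p s} \<times> orbit p"
  by (auto simp: chi_def split: if_splits)

lemma zhat_rot: "zhat (cis phi * q) = cis phi * zhat q"
  by (simp add: zhat_def norm_mult)

lemma zhat_rot_minus: "zhat (cis (- phi) * q) = cis (- phi) * zhat q"
  by (simp add: zhat_def norm_mult)

lemma rotinv_chi: "rotinv (chi p s)"
  unfolding rotinv_def
proof (intro allI)
  fix j :: nat and q :: complex
  have "phase (chi_comp p s) = (if s then 1 else cis phi)"
    by (simp add: phase_def chi_comp_def)
  then show "chi p s j (cis phi * q) = phase j * chi p s j q"
    by (simp add: chi_def rot_mem_orbit_iff zhat_rot)
qed

lemma chi_comp_orbit_mem_modes: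
  "(chi_comp p s, p) \<in> modes \<Longrightarrow> {chi_comp p s} \<times> orbit p \<subseteq> modes"
  using mem_modes_orbit_iff by blast

lemma trigpoly_chi:
  assumes "(chi_comp p s, p) \<in> modes"
  shows "trigpoly (chi p s)"
proof -
  have "finite (supp (chi p s))"
    by (rule finite_subset [OF supp_chi]) (simp add: orbit_def)
  moreover have "supp (chi p s) \<subseteq> modes"
    using supp_chi chi_comp_orbit_mem_modes [OF assms] by (rule order_trans)
  ultimately show ?thesis using rotinv_chi by (simp add: trigpoly_def)
qed

lemma supp_chi_subset_Xi_modes: "(chi_comp p s, p) \<in> Xi_modes \<Longrightarrow> supp (chi p s) \<subseteq> Xi_modes"
  using supp_chi mem_Xi_modes_orbit_iff by blast

lemma norm_le_4_sqrt_3_iff: "cmod p \<le> 4 * sqrt 3 \<longleftrightarrow> (cmod p)\<^sup>2 \<le> 48"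
proof
  assume "cmod p \<le> 4 * sqrt 3"
  then have "(cmod p)\<^sup>2 \<le> (4 * sqrt 3)\<^sup>2" by (rule power_mono) simp
  then show "(cmod p)\<^sup>2 \<le> 48" by (simp add: power_mult_distrib)
next
  assume "(cmod p)\<^sup>2 \<le> 48"
  then have "sqrt ((cmod p)\<^sup>2) \<le> sqrt 48" by (rule real_sqrt_le_mono)
  moreover have "sqrt 48 = 4 * sqrt 3"
    by (rule real_sqrt_unique) (simp_all add: power_mult_distrib)
  ultimately show "cmod p \<le> 4 * sqrt 3" by simp
qed

lemma chi0_eq_Psi0: "chi0 = Psi0"
  by (simp add: chi0_def Psi0_def)

lemma trigpoly_Xi:
  assumes "x \<in> Xi"
  shows "trigpoly x \<and> supp x \<subseteq> Xi_modes"
proof -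
  have chi_case: "trigpoly (chi p s) \<and> supp (chi p s) \<subseteq> Xi_modes" if "(chi_comp p s, p) \<in> Xi_modes" for p s
    using that Xi_modes_subset_modes supp_chi_subset_Xi_modes trigpoly_chi by blast
  from assms consider "x = chi0"
    | p s where "x = chi p s" "p \<in> (LamStar - {0}) \<union> (\<lambda>g. q1 + g) ` LamStar" "cmod p \<le> 4 * sqrt 3"
    | p s where "x = chi p s" "p \<in> {q1 - 4 * b1 + b2, q1 + b1 - 4 * b2}"
    unfolding Xi_def by blast
  then show ?thesis
  proof cases
    case 1
    have "(0::nat, lat 0 0) \<in> Xi_modes" by (simp add: mem_Xi_modes_lat_iff Xi_lat_def)
    then have "supp chi0 \<subseteq> Xi_modes"
      by (auto simp: chi0_def lat_def split: if_splits)
    then show ?thesis using 1 trigpoly_Psi0 chi0_eq_Psi0 by simp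
  next
    case (2 p s)
    then have "(chi_comp p s, p) \<in> Xi_modes"
      using LamStar_disjoint_LamK
      by (auto simp: Xi_modes_def modes_def freq_eq chi_comp_def norm_le_4_sqrt_3_iff
          simp flip: LamK_def)
    then show ?thesis using 2 chi_case by blast
  next
    case (3 p s)
    then have "p \<in> LamK" "p \<notin> LamStar"
      using LamStar_disjoint_LamK by (auto simp: extra_points_klat LamK_iff)
    then have "(chi_comp p s, p) \<in> Xi_modes"
      using 3 by (auto simp: Xi_modes_def modes_def freq_eq chi_comp_def orbit_eq)
    then show ?thesis using 3 chi_case by blast
  qed
qed

lemma chi_mem_Xi:
  assumes "(chi_comp p s, p) \<in> Xi_modes" "p \<noteq> 0"
  shows "chi p s \<in> Xi"
proof (cases "(cmod p)\<^sup>2 \<le> 48")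
  case True
  have "p \<in> LamStar \<or> p \<in> LamK"
    using assms(1) by (auto simp: Xi_modes_def modes_def freq_eq split: if_splits)
  then have "p \<in> (LamStar - {0}) \<union> (\<lambda>g. q1 + g) ` LamStar"
    using assms(2) by (auto simp: LamK_def)
  with True show ?thesis
    by (auto simp: Xi_def norm_le_4_sqrt_3_iff)
next
  case False
  then obtain e where "e \<in> {q1 - 4 * b1 + b2, q1 + b1 - 4 * b2}" "p \<in> orbit e"
    using assms(1) by (auto simp: Xi_modes_def)
  then show ?thesis
    using chi_orbit [of p e s] by (auto simp: Xi_def)
qed

lemma orbit_part_eq_chi:
  assumes d: "trigpoly d" and jp: "(j, p) \<in> modes" "p \<noteq> 0"
  shows "restrict_coeff ({j} \<times> orbit p) d = (\<lambda>j' p'. (d j p / chi p (j < 2) j p) * chi p (j < 2) j' p')"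
proof (intro ext)
  fix j' p'
  define z where "z q = (if j < 2 then 1 else zhat q)" for q
  define \<kappa> :: complex where "\<kappa> = of_real (1 / sqrt (3 * Vol))"
  have chi_eq: "chi p (j < 2) j' q = (if j' = j \<and> q \<in> orbit p then \<kappa> * z q else 0)" for j' q
    by (simp add: chi_def chi_comp_modes [OF jp(1)] z_def \<kappa>_def)
  have "\<kappa> \<noteq> 0" "z p \<noteq> 0"
    using Vol_pos jp(2) by (simp_all add: \<kappa>_def z_def zhat_def)
  have orbit_ratio: "d j q * z p = d j p * z q" if "q \<in> orbit p" for q
  proof -
    have r: "rotinv d" using d by (simp add: trigpoly_def)
    from that consider "q = p" | "q = cis (- phi) * p" | "q = cis phi * p"
      by (auto simp: mem_orbit_iff)
    then show ?thesis
    proof cases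
      case 2
      then show ?thesis using rotinv_minus [OF r, of j p] by (auto simp: z_def zhat_rot_minus)
    next
      case 3
      then show ?thesis using r by (auto simp: rotinv_def phase_def z_def zhat_rot)
    qed simp
  qed
  show "restrict_coeff ({j} \<times> orbit p) d j' p' = (d j p / chi p (j < 2) j p) * chi p (j < 2) j' p'"
  proof (cases "j' = j \<and> p' \<in> orbit p")
    case True
    then have "restrict_coeff ({j} \<times> orbit p) d j' p' = d j p * z p' / z p"
      using orbit_ratio [of p'] \<open>z p \<noteq> 0\<close> by (simp add: restrict_coeff_def field_simps)
    also have "\<dots> = (d j p / chi p (j < 2) j p) * chi p (j < 2) j' p'"
      using True \<open>\<kappa> \<noteq> 0\<close> \<open>z p \<noteq> 0\<close> by (simp add: chi_eq orbit_def)
    finally show ?thesis .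
  qed (auto simp: restrict_coeff_def chi_eq)
qed

lemma cspan_Xi_subset: "cspan Xi \<subseteq> {d. trigpoly d \<and> supp d \<subseteq> Xi_modes}"
proof
  fix c assume c: "c \<in> cspan Xi"
  then obtain F a where F: "finite F" "F \<subseteq> Xi" "c = (\<lambda>j q. \<Sum>x\<in>F. a x * x j q)"
    unfolding cspan_def by blast
  then have "trigpoly c"
    using trigpoly_Xi by (auto intro!: trigpoly_sum trigpoly_scale)
  moreover have "supp c \<subseteq> Xi_modes"
    by (rule supp_cspan_subset [OF _ c]) (use trigpoly_Xi in blast)
  ultimately show "c \<in> {d. trigpoly d \<and> supp d \<subseteq> Xi_modes}" by simp
qed

definition orbit_part :: "coeff \<Rightarrow> nat \<times> complex \<Rightarrow> coeff" where
  "orbit_part d x = restrict_coeff ({fst x} \<times> orbit (snd x)) d"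

lemma orbit_part_mem_cspan_Xi:
  assumes "trigpoly d" "(j, p) \<in> Xi_modes" "p \<noteq> 0"
  shows "orbit_part d (j, p) \<in> cspan Xi"
proof -
  have "(j, p) \<in> modes" using assms(2) Xi_modes_subset_modes by blast
  then have "chi p (j < 2) \<in> Xi"
    using assms(2,3) chi_mem_Xi chi_comp_modes by metis
  then show ?thesis
    unfolding orbit_part_def fst_conv snd_conv orbit_part_eq_chi [OF assms(1) \<open>(j, p) \<in> modes\<close> assms(3)]
    by (intro cspan_scale cspan_base)
qed

lemma card_orbit_partners:
  assumes "(j, p) \<in> Xi_modes" "p \<noteq> 0"
  shows "card {x \<in> Xi_modes. snd x \<noteq> 0 \<and> fst x = j \<and> p \<in> orbit (snd x)} = 3"
proof -
  have "{x \<in> Xi_modes. snd x \<noteq> 0 \<and> fst x = j \<and> p \<in> orbit (snd x)} = Pair j ` orbit p"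
  proof (intro equalityI subsetI)
    fix x assume "x \<in> {x \<in> Xi_modes. snd x \<noteq> 0 \<and> fst x = j \<and> p \<in> orbit (snd x)}"
    then show "x \<in> Pair j ` orbit p"
      using orbit_sym by (cases x) auto
  next
    fix x assume "x \<in> Pair j ` orbit p"
    then obtain q where "x = (j, q)" "q \<in> orbit p" by blast
    then show "x \<in> {x \<in> Xi_modes. snd x \<noteq> 0 \<and> fst x = j \<and> p \<in> orbit (snd x)}"
      using assms mem_Xi_modes_orbit_iff orbit_sym zero_mem_orbit_iff by auto
  qed
  moreover have "inj_on (Pair j) (orbit p)" by (simp add: inj_on_def)
  ultimately show ?thesis using card_orbit [OF assms(2)] by (simp add: card_image)
qed

text \<open>Summing the orbit parts over all nonzero modes of Xi counts every orbit three times;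
  the mode at the origin is a multiple of chi0.\<close>

lemma orbit_decomposition:
  assumes d: "trigpoly d" "supp d \<subseteq> Xi_modes"
  shows "d = (\<lambda>j p. (\<Sum>x\<in>{x \<in> Xi_modes. snd x \<noteq> 0}. 1/3 * orbit_part d x j p)
                  + (d 0 0 * sqrt Vol) * chi0 j p)"
proof (intro ext)
  fix j p
  let ?Sf = "{x \<in> Xi_modes. snd x \<noteq> 0}"
  let ?T = "{x \<in> Xi_modes. snd x \<noteq> 0 \<and> fst x = j \<and> p \<in> orbit (snd x)}"
  have "(\<Sum>x\<in>?Sf. 1/3 * orbit_part d x j p) = (\<Sum>x\<in>?T. 1/3 * d j p)"
    using finite_Xi_modes
    by (intro sum.mono_neutral_cong_right) (auto simp: orbit_part_def restrict_coeff_def)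
  then have sum_eq: "(\<Sum>x\<in>?Sf. 1/3 * orbit_part d x j p) = of_nat (card ?T) / 3 * d j p"
    by simp
  show "d j p = (\<Sum>x\<in>?Sf. 1/3 * orbit_part d x j p) + (d 0 0 * sqrt Vol) * chi0 j p"
  proof (cases "p = 0")
    case True
    then have "?T = {}" by (auto simp: mem_orbit_iff)
    then have "card ?T = 0" by (simp only: card.empty)
    then have "(\<Sum>x\<in>?Sf. 1/3 * orbit_part d x j p) = 0" by (simp only: sum_eq) simp
    moreover have "d j 0 = 0" if "j \<noteq> 0"
      using d(1) that rotinv_at_zero by (auto simp: trigpoly_def)
    ultimately show ?thesis
      using True Vol_pos by (auto simp: chi0_def)
  next
    case False
    have "card ?T = 3" if "d j p \<noteq> 0"
      using that d(2) False by (intro card_orbit_partners) auto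
    then have "(\<Sum>x\<in>?Sf. 1/3 * orbit_part d x j p) = d j p"
      by (cases "d j p = 0") (simp_all only: sum_eq, simp_all)
    then show ?thesis
      using False by (simp add: chi0_def)
  qed
qed

lemma cspan_Xi_eq: "cspan Xi = {d. trigpoly d \<and> supp d \<subseteq> Xi_modes}"
proof (intro equalityI subsetI)
  fix d assume "d \<in> {d. trigpoly d \<and> supp d \<subseteq> Xi_modes}"
  then have d: "trigpoly d" "supp d \<subseteq> Xi_modes" by auto
  have "finite {x \<in> Xi_modes. snd x \<noteq> 0}" using finite_Xi_modes by simp
  moreover have "orbit_part d x \<in> cspan Xi" if "x \<in> {x \<in> Xi_modes. snd x \<noteq> 0}" for x
    using that orbit_part_mem_cspan_Xi [OF d(1), of "fst x" "snd x"] by simp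
  ultimately have "(\<lambda>j p. \<Sum>x\<in>{x \<in> Xi_modes. snd x \<noteq> 0}. 1/3 * orbit_part d x j p) \<in> cspan Xi"
    by (intro cspan_sum cspan_scale)
  moreover have "(\<lambda>j p. (d 0 0 * sqrt Vol) * chi0 j p) \<in> cspan Xi"
    by (intro cspan_scale cspan_base) (simp add: Xi_def)
  ultimately show "d \<in> cspan Xi"
    by (subst orbit_decomposition [OF d]) (rule cspan_add)
qed (use cspan_Xi_subset in blast)

lemma restrict_Xi_modes_mem_cspan_Xi:
  assumes "supp c \<subseteq> modes" "rotinv c"
  shows "restrict_coeff Xi_modes c \<in> cspan Xi"
proof -
  have "rotinv (restrict_coeff Xi_modes c)"
    using assms(2) by (simp add: rotinv_def restrict_coeff_def rot_mem_Xi_modes_iff)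
  then show ?thesis
    using Xi_modes_subset_modes finite_Xi_modes supp_restrict_coeff [of Xi_modes c]
    by (auto simp: cspan_Xi_eq trigpoly_def intro: finite_subset)
qed

lemma PXi_eq:
  assumes "supp c \<subseteq> modes" "rotinv c"
  shows "PXi c = restrict_coeff Xi_modes c"
  unfolding PXi_def
proof (rule orth_proj_eq_restrict [OF finite_Xi_modes])
  show "x \<in> Xi \<Longrightarrow> supp x \<subseteq> Xi_modes" for x
    using trigpoly_Xi by blast
qed (rule restrict_Xi_modes_mem_cspan_Xi [OF assms])

lemma PXi_perp_eq:
  assumes "supp c \<subseteq> modes" "rotinv c"
  shows "PXi_perp c = restrict_coeff (- Xi_modes) c"
  by (simp add: PXi_perp_def PXi_eq [OF assms] restrict_coeff_def fun_eq_iff)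

lemma PXi_cspan_Xi:
  assumes "c \<in> cspan Xi"
  shows "PXi c = c"
proof -
  have "trigpoly c" "supp c \<subseteq> Xi_modes" using assms by (simp_all add: cspan_Xi_eq)
  then show ?thesis
    using supp_subset_zero [of c Xi_modes]
    by (auto simp: trigpoly_def PXi_eq restrict_coeff_def fun_eq_iff)
qed

lemma PXi_H1_PXi_perp_eq:
  assumes "f \<in> L2K1"
  shows "PXi (H1 (PXi_perp f)) = restrict_coeff Xi_modes (H1 (restrict_coeff (- Xi_modes) f))"
    and "PXi (H1 (PXi_perp f)) \<in> cspan Xi"
proof -
  let ?g = "restrict_coeff (- Xi_modes) f"
  have f: "supp f \<subseteq> modes" "rotinv f" using assms by (simp_all add: L2K1_iff)
  then have "supp ?g \<subseteq> modes" "rotinv ?g"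
    by (auto simp: restrict_coeff_def rotinv_def rot_mem_Xi_modes_iff split: if_splits)
  then have H1g: "supp (H1 ?g) \<subseteq> modes" "rotinv (H1 ?g)"
    by (simp_all add: supp_H1_subset_modes rotinv_H1)
  show eq: "PXi (H1 (PXi_perp f)) = restrict_coeff Xi_modes (H1 ?g)"
    by (simp add: PXi_perp_eq [OF f] PXi_eq [OF H1g])
  show "PXi (H1 (PXi_perp f)) \<in> cspan Xi"
    unfolding eq by (rule restrict_Xi_modes_mem_cspan_Xi [OF H1g])
qed

lemma psi8_mem_cspan_Xi: "psi8 \<alpha> \<in> cspan Xi"
proof -
  have "trigpoly (psi8 \<alpha>)"
    unfolding psi8_def by (intro trigpoly_sum trigpoly_scale trigpoly_Psi) simp
  moreover have "supp (psi8 \<alpha>) \<subseteq> Xi_modes"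
  proof
    fix x assume "x \<in> supp (psi8 \<alpha>)"
    then obtain n where "n \<le> 8" "x \<in> supp (Psi n)"
      by (cases x) (auto simp: psi8_def elim!: sum.not_neutral_contains_not_neutral)
    then show "x \<in> Xi_modes" using supp_Psi_subset_Xi_modes by blast
  qed
  ultimately show ?thesis by (simp add: cspan_Xi_eq)
qed

lemma psi8_mem_range_PXi: "psi8 \<alpha> \<in> PXi ` L2K1"
proof (rule rev_image_eqI)
  show "psi8 \<alpha> \<in> L2K1"
    using psi8_mem_cspan_Xi by (simp add: cspan_Xi_eq trigpoly_iff)
  show "psi8 \<alpha> = PXi (psi8 \<alpha>)"
    by (simp add: PXi_cspan_Xi [OF psi8_mem_cspan_Xi])
qed

section \<open>The spectral gap of H0 off the span of Xi\<close>

lemma H0_gap: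
  assumes f: "f \<in> domH0" and P: "PXi f = (\<lambda>j p. 0)"
  shows "7 * nrm f \<le> nrm (H0 f)"
proof -
  have L: "supp f \<subseteq> modes" "rotinv f" "(\<lambda>(j, p). (cmod (f j p))\<^sup>2) summable_on UNIV"
    using f by (simp_all add: domH0_def L2K1_iff)
  have outside: "f j p = 0" if "(j, p) \<in> Xi_modes" for j p
    using P that by (metis PXi_eq [OF L(1,2)] restrict_coeff_def)
  have pointwise: "49 * (cmod (f j p))\<^sup>2 \<le> (cmod p * cmod (f j p))\<^sup>2" for j p
  proof (cases "f j p = 0")
    case False
    then have "(j, p) \<in> modes - Xi_modes" using L(1) outside by auto
    then have "49 \<le> (cmod p)\<^sup>2" using norm_sq_ge_49_outside_Xi_modes by auto
    then show ?thesis by (simp add: power_mult_distrib mult_right_mono)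
  qed simp
  have "49 * (\<Sum>\<^sub>\<infinity>(j, p). (cmod (f j p))\<^sup>2) = (\<Sum>\<^sub>\<infinity>(j, p). 49 * (cmod (f j p))\<^sup>2)"
    by (simp only: case_prod_unfold infsum_cmult_right')
  also have "\<dots> \<le> (\<Sum>\<^sub>\<infinity>(j, p). (cmod p * cmod (f j p))\<^sup>2)"
    using f L(3) pointwise
    by (intro infsum_mono) (auto simp: domH0_def case_prod_unfold summable_on_cmult_right)
  also have "\<dots> = (\<Sum>\<^sub>\<infinity>(j, p). (cmod (H0 f j p))\<^sup>2)"
    by (rule infsum_norm_H0_sq [OF L(1), symmetric])
  finally have "49 * (\<Sum>\<^sub>\<infinity>(j, p). (cmod (f j p))\<^sup>2) \<le> (\<Sum>\<^sub>\<infinity>(j, p). (cmod (H0 f j p))\<^sup>2)" .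
  then have "sqrt (49 * (Vol * (\<Sum>\<^sub>\<infinity>(j, p). (cmod (f j p))\<^sup>2)))
      \<le> sqrt (Vol * (\<Sum>\<^sub>\<infinity>(j, p). (cmod (H0 f j p))\<^sup>2))"
    using Vol_pos by (intro real_sqrt_le_mono) (simp add: algebra_simps)
  then show ?thesis by (simp add: nrm_def real_sqrt_mult)
qed

text \<open>The orbit of q1 - 2 b1 - 2 b2 lies just outside Xi_modes, at distance exactly 7 from 0.\<close>

definition gap_witness :: coeff where
  "gap_witness = chi (klat (-2) (-2)) True"

lemma orbit_gap_witness: "orbit (klat (-2) (-2)) = {klat (-2) (-2), klat (-2) 5, klat 5 (-2)}"
  by (simp add: orbit_klat)

lemma gap_witness_eq:
  "gap_witness j q = (if j = 1 \<and> q \<in> orbit (klat (-2) (-2)) then of_real (1 / sqrt (3 * Vol)) else 0)"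
proof -
  have "klat (-2) (-2) \<notin> LamStar"
    using LamStar_disjoint_LamK by (auto simp: LamK_iff)
  then show ?thesis by (simp add: gap_witness_def chi_def chi_comp_def)
qed

lemma supp_gap_witness: "supp gap_witness = {1} \<times> orbit (klat (-2) (-2))"
  using Vol_pos by (auto simp: gap_witness_eq split: if_splits)

lemma trigpoly_gap_witness: "trigpoly gap_witness"
proof -
  have "(1, klat (-2) (-2)) \<in> modes" by (simp add: mem_modes_klat_iff)
  then show ?thesis
    unfolding gap_witness_def using LamStar_disjoint_LamK
    by (intro trigpoly_chi) (auto simp: chi_comp_def LamK_iff)
qed

lemma supp_gap_witness_outside_Xi_modes: "supp gap_witness \<inter> Xi_modes = {}"
  by (auto simp: supp_gap_witness orbit_gap_witness mem_Xi_modes_klat_iff Xi_klat_def)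

lemma norm_sq_supp_gap_witness: "x \<in> supp gap_witness \<Longrightarrow> (cmod (snd x))\<^sup>2 = 49"
  by (auto simp: supp_gap_witness orbit_gap_witness norm_klat_sq)

lemma infsum_gap_witness: "(\<Sum>\<^sub>\<infinity>(j, p). (cmod (gap_witness j p))\<^sup>2) = 1 / Vol"
proof -
  have "(\<Sum>\<^sub>\<infinity>(j, p). (cmod (gap_witness j p))\<^sup>2) = (\<Sum>(j, p)\<in>supp gap_witness. (cmod (gap_witness j p))\<^sup>2)"
    using trigpoly_gap_witness by (intro infsum_eq_sum_if_zero_outside) (auto simp: trigpoly_def)
  also have "\<dots> = (\<Sum>q\<in>orbit (klat (-2) (-2)). 1 / (3 * Vol))"
    using Vol_pos
    by (simp add: supp_gap_witness sum.cartesian_product [symmetric] gap_witness_eq norm_divide power_divide)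
  also have "\<dots> = 1 / Vol"
    using card_orbit [of "klat (-2) (-2)"] zero_notin_LamK by (auto simp: LamK_iff)
  finally show ?thesis .
qed

lemma nrm_gap_witness: "nrm gap_witness = 1"
  using Vol_pos by (simp add: nrm_def infsum_gap_witness)

lemma PXi_gap_witness: "PXi gap_witness = (\<lambda>j p. 0)"
proof -
  have "gap_witness j p = 0" if "(j, p) \<in> Xi_modes" for j p
    using supp_gap_witness_outside_Xi_modes that by (meson disjoint_iff mem_supp_iff)
  then show ?thesis
    using trigpoly_gap_witness by (auto simp: trigpoly_def PXi_eq restrict_coeff_def fun_eq_iff)
qed

lemma nrm_H0_gap_witness: "nrm (H0 gap_witness) = 7"
proof -
  have modes: "supp gap_witness \<subseteq> modes" using trigpoly_gap_witness by (simp add: trigpoly_def)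
  have "(cmod p * cmod (gap_witness j p))\<^sup>2 = 49 * (cmod (gap_witness j p))\<^sup>2" for j p
    using norm_sq_supp_gap_witness [of "(j, p)"] by (cases "gap_witness j p = 0") (simp_all add: power_mult_distrib)
  then have "(\<Sum>\<^sub>\<infinity>(j, p). (cmod (H0 gap_witness j p))\<^sup>2) = (\<Sum>\<^sub>\<infinity>(j, p). 49 * (cmod (gap_witness j p))\<^sup>2)"
    by (simp add: infsum_norm_H0_sq [OF modes])
  also have "\<dots> = 49 * (\<Sum>\<^sub>\<infinity>(j, p). (cmod (gap_witness j p))\<^sup>2)"
    by (simp only: case_prod_unfold infsum_cmult_right')
  finally show ?thesis
    using Vol_pos by (simp add: nrm_def infsum_gap_witness)
qed

section \<open>Coupling across the boundary of the modes of Xi\<close>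

definition exits :: "nat \<times> complex \<Rightarrow> nat set" where
  "exits x = {k. k < 3 \<and> neighbour x k \<notin> Xi_modes}"

definition outer_boundary :: "(nat \<times> complex) set" where
  "outer_boundary = (\<lambda>(x, k). neighbour x k) ` Sigma Xi_modes exits"

lemma exits_subsingleton:
  assumes "x \<in> Xi_modes"
  obtains "exits x = {}" | k where "exits x = {k}"
proof -
  have "k = k'" if "k \<in> exits x" "k' \<in> exits x" for k k'
    using that assms Xi_modes_subset_modes crossing_unique [of x k k'] by (auto simp: exits_def)
  then show ?thesis using that by blast
qed

lemma inj_on_neighbour_exits: "inj_on (\<lambda>(x, k). neighbour x k) (Sigma Xi_modes exits)"
proof (intro inj_onI, clarify)
  fix x k x' k' assume x: "x \<in> Xi_modes" "k \<in> exits x" and x': "x' \<in> Xi_modes" "k' \<in> exits x'"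
    and eq: "neighbour x k = neighbour x' k'"
  have "fst x < 4" "fst x' < 4" "x \<in> modes"
    using x x' Xi_modes_subset_modes by (auto simp: modes_def)
  let ?y = "neighbour x k"
  have k: "k < 3" "k' < 3" "?y \<notin> Xi_modes" using x x' by (auto simp: exits_def)
  have "?y \<in> modes"
    using neighbour_mem_modes_iff [OF \<open>fst x < 4\<close> k(1)] \<open>x \<in> modes\<close> by simp
  moreover have "neighbour ?y k = x" by (rule neighbour_neighbour [OF \<open>fst x < 4\<close>])
  moreover have "neighbour ?y k' = x'" using eq neighbour_neighbour [OF \<open>fst x' < 4\<close>, of k'] by simp
  ultimately have y: "?y \<in> modes" "neighbour ?y k = x" "neighbour ?y k' = x'" by blast+
  then have "k = k'"
    using x x' k y by (intro crossing_unique [of ?y k k']) auto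
  then show "x = x' \<and> k = k'" using y by simp
qed

lemma finite_exits: "finite (exits x)"
  by (simp add: exits_def)

lemma norm_H1_outer_sq:
  assumes "x \<in> Xi_modes"
  shows "(cmod (case_prod (H1 (restrict_coeff (- Xi_modes) f)) x))\<^sup>2
      = (\<Sum>k\<in>exits x. (cmod (case_prod f (neighbour x k)))\<^sup>2)"
proof -
  have "fst x < 4" using assms Xi_modes_subset_modes by (auto simp: modes_def)
  then have "case_prod (H1 (restrict_coeff (- Xi_modes) f)) x
      = (\<Sum>k<3. H1_coeff (fst x) k * case_prod (restrict_coeff (- Xi_modes) f) (neighbour x k))"
    by (simp add: H1_eq case_prod_unfold)
  also have "\<dots> = (\<Sum>k\<in>exits x. H1_coeff (fst x) k * case_prod f (neighbour x k))"
    by (rule sum.mono_neutral_cong_right) (auto simp: exits_def restrict_coeff_def case_prod_unfold)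
  finally have H1_eq_exits: "case_prod (H1 (restrict_coeff (- Xi_modes) f)) x
      = (\<Sum>k\<in>exits x. H1_coeff (fst x) k * case_prod f (neighbour x k))" .
  from assms show ?thesis
  proof (cases rule: exits_subsingleton)
    case (2 k)
    then have "k < 3" by (auto simp: exits_def)
    with 2 show ?thesis by (simp add: H1_eq_exits norm_mult norm_H1_coeff)
  qed (simp add: H1_eq_exits)
qed

lemma nrm_PXi_H1_PXi_perp:
  assumes "f \<in> L2K1"
  shows "nrm (PXi (H1 (PXi_perp f))) = sqrt (Vol * (\<Sum>(j, p)\<in>outer_boundary. (cmod (f j p))\<^sup>2))"
proof -
  let ?g = "restrict_coeff (- Xi_modes) f"
  have "nrm (PXi (H1 (PXi_perp f)))
      = sqrt (Vol * (\<Sum>(j, p)\<in>Xi_modes. (cmod (restrict_coeff Xi_modes (H1 ?g) j p))\<^sup>2))"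
    by (simp only: PXi_H1_PXi_perp_eq [OF assms] nrm_finite [OF finite_Xi_modes supp_restrict_coeff])
  also have "(\<Sum>(j, p)\<in>Xi_modes. (cmod (restrict_coeff Xi_modes (H1 ?g) j p))\<^sup>2)
      = (\<Sum>x\<in>Xi_modes. (cmod (case_prod (H1 ?g) x))\<^sup>2)"
    by (rule sum.cong) (auto simp: restrict_coeff_def)
  also have "\<dots> = (\<Sum>x\<in>Xi_modes. \<Sum>k\<in>exits x. (cmod (case_prod f (neighbour x k)))\<^sup>2)"
    by (rule sum.cong) (simp_all add: norm_H1_outer_sq)
  also have "\<dots> = (\<Sum>(x, k)\<in>Sigma Xi_modes exits. (cmod (case_prod f (neighbour x k)))\<^sup>2)"
    by (rule sum.Sigma [OF finite_Xi_modes]) (simp add: finite_exits)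
  also have "\<dots> = (\<Sum>(j, p)\<in>outer_boundary. (cmod (f j p))\<^sup>2)"
    unfolding outer_boundary_def by (subst sum.reindex [OF inj_on_neighbour_exits]) (simp add: case_prod_unfold)
  finally show ?thesis .
qed

lemma mem_outer_boundaryI:
  assumes "fst y < 4" "y \<notin> Xi_modes" "k < 3" "neighbour y k \<in> Xi_modes"
  shows "y \<in> outer_boundary"
proof -
  have "neighbour (neighbour y k) k = y" by (rule neighbour_neighbour [OF assms(1)])
  then have "(neighbour y k, k) \<in> Sigma Xi_modes exits" using assms(2-4) by (simp add: exits_def)
  then show ?thesis using \<open>neighbour (neighbour y k) k = y\<close> unfolding outer_boundary_def by force
qed

lemma finite_outer_boundary: "finite outer_boundary"
  unfolding outer_boundary_def using finite_Xi_modes finite_exits by simp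

lemma nrm_PXi_H1_PXi_perp_le:
  assumes "f \<in> L2K1"
  shows "nrm (PXi (H1 (PXi_perp f))) \<le> nrm f"
proof -
  have "(\<lambda>(j, p). (cmod (f j p))\<^sup>2) summable_on UNIV" using assms by (simp add: L2K1_iff)
  then have "(\<Sum>(j, p)\<in>outer_boundary. (cmod (f j p))\<^sup>2) \<le> (\<Sum>\<^sub>\<infinity>(j, p). (cmod (f j p))\<^sup>2)"
    by (rule finite_sum_le_infsum) (auto simp: finite_outer_boundary)
  then show ?thesis
    using Vol_pos by (simp add: nrm_PXi_H1_PXi_perp [OF assms] nrm_def [of f])
qed

lemma supp_gap_witness_subset_outer_boundary: "supp gap_witness \<subseteq> outer_boundary"
proof -
  have "(1, klat a b) \<in> outer_boundary"
    if "(1, klat a b) \<in> supp gap_witness" "k < 3" "Xi_lat (a - fst (qv_offset k)) (b - snd (qv_offset k))" for a b k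
  proof (rule mem_outer_boundaryI)
    show "(1, klat a b) \<notin> Xi_modes" using that(1) supp_gap_witness_outside_Xi_modes by blast
    show "neighbour (1, klat a b) k \<in> Xi_modes" using that(2,3) by (simp add: neighbour_klat mem_Xi_modes_lat_iff)
  qed (use that in simp_all)
  from this [of "-2" "-2" 0] this [of "-2" 5 2] this [of 5 "-2" 1] show ?thesis
    by (auto simp: supp_gap_witness orbit_gap_witness qv_offset_def Xi_lat_def)
qed

lemma nrm_PXi_H1_PXi_perp_gap_witness: "nrm (PXi (H1 (PXi_perp gap_witness))) = 1"
proof -
  have "(\<Sum>\<^sub>\<infinity>(j, p). (cmod (gap_witness j p))\<^sup>2) = (\<Sum>(j, p)\<in>outer_boundary. (cmod (gap_witness j p))\<^sup>2)"
    using finite_outer_boundary supp_gap_witness_subset_outer_boundary supp_subset_zero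
    by (intro infsum_eq_sum_if_zero_outside) auto
  then have "(\<Sum>(j, p)\<in>outer_boundary. (cmod (gap_witness j p))\<^sup>2) = 1 / Vol"
    by (simp only: infsum_gap_witness)
  moreover have "gap_witness \<in> L2K1" using trigpoly_gap_witness by (simp add: trigpoly_iff)
  ultimately show ?thesis
    using Vol_pos by (simp add: nrm_PXi_H1_PXi_perp)
qed

lemma opnorm_PXi_H1_PXi_perp: "opnorm (\<lambda>f. PXi (H1 (PXi_perp f))) = 1"
  unfolding opnorm_def
proof (rule antisym)
  show "(SUP f\<in>{f \<in> L2K1. nrm f \<le> 1}. ereal (nrm (PXi (H1 (PXi_perp f))))) \<le> 1"
  proof (rule SUP_least)
    fix f assume "f \<in> {f \<in> L2K1. nrm f \<le> 1}"
    then show "ereal (nrm (PXi (H1 (PXi_perp f)))) \<le> 1"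
      using nrm_PXi_H1_PXi_perp_le [of f] by simp
  qed
  have "gap_witness \<in> {f \<in> L2K1. nrm f \<le> 1}"
    using trigpoly_gap_witness nrm_gap_witness by (simp add: trigpoly_iff)
  then show "1 \<le> (SUP f\<in>{f \<in> L2K1. nrm f \<le> 1}. ereal (nrm (PXi (H1 (PXi_perp f)))))"
    by (rule SUP_upper2) (simp add: nrm_PXi_H1_PXi_perp_gap_witness)
qed

lemma opnorm_orth_proj_PXi_H1_PXi_perp:
  assumes "is_orth_proj Q"
  shows "opnorm (\<lambda>f. Q (PXi (H1 (PXi_perp f)))) \<le> 1"
  unfolding opnorm_def
proof (rule SUP_least)
  fix f assume "f \<in> {f \<in> L2K1. nrm f \<le> 1}"
  then have f: "f \<in> L2K1" "nrm f \<le> 1" by auto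
  have "PXi (H1 (PXi_perp f)) \<in> cspan Xi"
    by (rule PXi_H1_PXi_perp_eq(2) [OF f(1)])
  then have "PXi (H1 (PXi_perp f)) \<in> L2K1" "finite (supp (PXi (H1 (PXi_perp f))))"
    by (simp_all add: cspan_Xi_eq trigpoly_iff)
  then have "nrm (Q (PXi (H1 (PXi_perp f)))) \<le> nrm (PXi (H1 (PXi_perp f)))"
    by (rule is_orth_proj_nrm_le [OF assms])
  also have "\<dots> \<le> 1"
    using nrm_PXi_H1_PXi_perp_le [OF f(1)] f(2) by linarith
  finally show "ereal (nrm (Q (PXi (H1 (PXi_perp f))))) \<le> 1" by simp
qed

theorem proposition4p4:
  shows "(\<forall>f\<in>domH0. PXi f = (\<lambda>j p. 0) \<longrightarrow> nrm (H0 f) \<ge> 7 * nrm f)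
    \<and> (\<forall>C::real. (\<forall>f\<in>domH0. PXi f = (\<lambda>j p. 0) \<longrightarrow> nrm (H0 f) \<ge> C * nrm f) \<longrightarrow> C \<le> 7)
    \<and> (\<forall>\<alpha>::real. psi8 \<alpha> \<in> PXi ` L2K1)
    \<and> opnorm (\<lambda>f. PXi (H1 (PXi_perp f))) = 1
    \<and> (\<forall>Q. is_orth_proj Q \<longrightarrow> opnorm (\<lambda>f. Q (PXi (H1 (PXi_perp f)))) \<le> 1)"
proof (intro conjI allI impI ballI)
  show "7 * nrm f \<le> nrm (H0 f)" if "f \<in> domH0" "PXi f = (\<lambda>j p. 0)" for f
    using H0_gap that by blast
  show "C \<le> 7" if "\<forall>f\<in>domH0. PXi f = (\<lambda>j p. 0) \<longrightarrow> C * nrm f \<le> nrm (H0 f)" for C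
    using that trigpoly_domH0 [OF trigpoly_gap_witness] PXi_gap_witness nrm_gap_witness nrm_H0_gap_witness
    by force
qed (simp_all add: psi8_mem_range_PXi opnorm_PXi_H1_PXi_perp opnorm_orth_proj_PXi_H1_PXi_perp)

end
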